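(* Let $(X,d)$ be a Cantor space. Then there exists $f\in\mathcal{H}(X)$ such that $f^3$ is topologically stable but $f$ is not topologically stable.
   Context: A Cantor space is a compact metric space without isolated points that is totally disconnected. $\mathcal{H}(X)$ is the set of homeomorphisms; $d_{C^0}(f,g)=\sup_x d(f(x),g(x))$; $D(f,g)=\max\{d_{C^0}(f,g),d_{C^0}(f^{-1},g^{-1})\}$. $f\in\mathcal{H}(X)$ is topologically stable if for every $\epsilon>0$ there is $\delta>0$ such that every $g\in\mathcal{H}(X)$ with $D(f,g)<\delta$ admits a continuous $h:X\to X$ with $d_{C^0}(h,\mathrm{id}_X)<\epsilon$ and $h\circ g=f\circ h$. *)

theory Defs
  imports "HOL-Analysis.Analysis"
begin

definition totally_disconnected_set :: "'a::topological_space set \<Rightarrow> bool" where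
  "totally_disconnected_set X \<longleftrightarrow> (\<forall>S. S \<subseteq> X \<and> connected S \<longrightarrow> (\<exists>a. S \<subseteq> {a}))"

definition cantor_space :: "'a::metric_space set \<Rightarrow> bool" where
  "cantor_space X \<longleftrightarrow> X \<noteq> {} \<and> compact X \<and> (\<forall>x\<in>X. x islimpt X)
      \<and> totally_disconnected_set X"

text \<open>The homeomorphisms of X (maps are only relevant on X).\<close>
definition homeos :: "'a::topological_space set \<Rightarrow> ('a \<Rightarrow> 'a) set" where
  "homeos X = {f. \<exists>g. homeomorphism X X f g}"

definition dC0 :: "'a::metric_space set \<Rightarrow> ('a \<Rightarrow> 'a) \<Rightarrow> ('a \<Rightarrow> 'a) \<Rightarrow> real" where
  "dC0 X f g = (SUP x\<in>X. dist (f x) (g x))"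

definition Dist_H :: "'a::metric_space set \<Rightarrow> ('a \<Rightarrow> 'a) \<Rightarrow> ('a \<Rightarrow> 'a) \<Rightarrow> real" where
  "Dist_H X f g = max (dC0 X f g) (dC0 X (inv_into X f) (inv_into X g))"

definition topologically_stable :: "'a::metric_space set \<Rightarrow> ('a \<Rightarrow> 'a) \<Rightarrow> bool" where
  "topologically_stable X f \<longleftrightarrow>
     (\<forall>\<epsilon>>0. \<exists>\<delta>>0. \<forall>g\<in>homeos X. Dist_H X f g < \<delta> \<longrightarrow>
        (\<exists>h. continuous_on X h \<and> h ` X \<subseteq> X \<and> dC0 X h id < \<epsilon>
             \<and> (\<forall>x\<in>X. h (g x) = f (h x))))"

end

theory Submission
  imports Defs "HOL-Computational_Algebra.Primes"
begin

text \<open>We build clopen partitions \<open>P n\<close> of mesh \<open>1 / Suc n\<close>, each refining the previous one, with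
  compatible permutations \<open>\<sigma> n\<close> of the pieces. A cycle of pieces whose length is divisible by 3
  keeps that length forever, while a cycle of length \<open>l\<close> prime to 3 is refined into cycles of
  length \<open>3 l\<close> and cycles of a length prime to 3 that exceeds \<open>n\<close>. The homeomorphism \<open>f\<close> with
  \<open>f Q \<subseteq> \<sigma> n Q\<close> for all pieces then has only periods divisible by 3, yet at every scale a
  cycle of pieces of length prime to 3; rerouting \<open>f\<close> inside two small pieces of that cycle gives
  arbitrarily close homeomorphisms with a period prime to 3, which rules out stability of \<open>f\<close>.
  For \<open>f ^^ 3\<close> every piece of \<open>P n\<close> contains a point whose period equals the period of the
  piece under \<open>\<sigma> n ^^ 3\<close>. A nearby homeomorphism permutes the pieces in the same way, and
  collapsing each piece to a point of an equivariant choice of such periodic points is a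
  semiconjugacy close to the identity.\<close>

section \<open>Clopen partitions of a Cantor space\<close>

definition clopen_in :: "'a::topological_space set \<Rightarrow> 'a set \<Rightarrow> bool" where
  "clopen_in X C \<longleftrightarrow> openin (top_of_set X) C \<and> closedin (top_of_set X) C"

lemma clopen_in_subset: "clopen_in X C \<Longrightarrow> C \<subseteq> X"
  by (metis clopen_in_def openin_subset topspace_euclidean_subtopology)

lemma clopen_in_self: "clopen_in X X"
  by (metis clopen_in_def closedin_topspace openin_topspace topspace_euclidean_subtopology)

lemma clopen_in_Int: "clopen_in X A \<Longrightarrow> clopen_in X B \<Longrightarrow> clopen_in X (A \<inter> B)"
  by (auto simp: clopen_in_def)

lemma clopen_in_Diff: "clopen_in X A \<Longrightarrow> clopen_in X B \<Longrightarrow> clopen_in X (A - B)"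
  by (auto simp: clopen_in_def)

lemma compact_clopen_in: "compact X \<Longrightarrow> clopen_in X C \<Longrightarrow> compact C"
  by (metis clopen_in_def closedin_compact_eq compact_imp_closed inf.absorb_iff2 compact_Int_closed
      closedin_closed clopen_in_subset)

lemma clopen_in_nhd:
  fixes X :: "'a::metric_space set"
  assumes "compact X" "totally_disconnected_set X" "x \<in> X" "r > 0"
  obtains C where "clopen_in X C" "x \<in> C" "C \<subseteq> ball x r"
proof -
  let ?T = "top_of_set X"
  have "connected_component_of_set ?T x = {x}"
  proof -
    have "connected (connected_component_of_set ?T x)" "connected_component_of_set ?T x \<subseteq> X"
      using connectedin_connected_component_of[of ?T x] by (auto simp: connectedin_subtopology)
    then obtain a where "connected_component_of_set ?T x \<subseteq> {a}"
      using assms(2) unfolding totally_disconnected_set_def by metis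
    moreover have "x \<in> connected_component_of_set ?T x"
      using assms(3) by (simp add: connected_component_of_refl)
    ultimately show ?thesis by blast
  qed
  then have component: "{x} \<in> connected_components_of ?T"
    using connected_component_in_connected_components_of[of ?T x] assms(3) by simp
  have "locally_compact_space ?T" "Hausdorff_space ?T" "compactin ?T {x}" "openin ?T (X \<inter> ball x r)"
    using assms by (auto simp: compact_imp_locally_compact_space compact_space_subtopology
        Hausdorff_space_subtopology compactin_subtopology)
  then obtain U V where UV: "openin ?T U" "openin ?T V" "disjnt U V" "U \<union> V = topspace ?T"
      "{x} \<subseteq> U" "U \<subseteq> X \<inter> ball x r"
    by (metis wilder_locally_compact_component_thm[OF _ _ component] assms(3,4) IntI
        centre_in_ball empty_subsetI insert_subset)
  then have "U = X - V"
    by (auto simp: disjnt_def)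
  then have "closedin ?T U"
    using UV(2) by auto
  then show thesis
    using UV that unfolding clopen_in_def by blast
qed

lemma diameter_le_metric:
  fixes S :: "'a::metric_space set"
  assumes "0 \<le> d" "\<And>x y. x \<in> S \<Longrightarrow> y \<in> S \<Longrightarrow> dist x y \<le> d"
  shows "diameter S \<le> d"
  using assms by (auto simp: diameter_def intro!: cSUP_least)

text \<open>Boundedness is part of the definition because \<open>diameter\<close> is meaningless on unbounded sets.\<close>
definition clopen_partition :: "'a::metric_space set \<Rightarrow> 'a set \<Rightarrow> 'a set set \<Rightarrow> real \<Rightarrow> bool" where
  "clopen_partition X K P e \<longleftrightarrow> finite P \<and> \<Union>P = K \<and> disjoint P
     \<and> (\<forall>Q\<in>P. clopen_in X Q \<and> Q \<noteq> {} \<and> bounded Q \<and> diameter Q < e)"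

lemma clopen_partition_unique:
  assumes "clopen_partition X K P e" "Q \<in> P" "R \<in> P" "x \<in> Q" "x \<in> R"
  shows "Q = R"
  using assms unfolding clopen_partition_def pairwise_def disjnt_def by blast

definition piece_of :: "'a set set \<Rightarrow> 'a \<Rightarrow> 'a set" where
  "piece_of P x = (THE Q. Q \<in> P \<and> x \<in> Q)"

lemma piece_of_eq: "clopen_partition X K P e \<Longrightarrow> Q \<in> P \<Longrightarrow> x \<in> Q \<Longrightarrow> piece_of P x = Q"
  unfolding piece_of_def by (rule the_equality) (auto dest: clopen_partition_unique)

lemma piece_of:
  assumes "clopen_partition X K P e" "x \<in> K"
  shows "piece_of P x \<in> P" "x \<in> piece_of P x"
proof -
  obtain Q where "Q \<in> P" "x \<in> Q"
    using assms unfolding clopen_partition_def by blast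
  then show "piece_of P x \<in> P" "x \<in> piece_of P x"
    using piece_of_eq[OF assms(1)] by simp_all
qed

lemma clopen_partition_dist_less:
  assumes "clopen_partition X K P e" "Q \<in> P" "x \<in> Q" "y \<in> Q"
  shows "dist x y < e"
  using assms diameter_bounded_bound[of Q x y] unfolding clopen_partition_def by force

lemma clopen_partition_mono: "clopen_partition X K P e \<Longrightarrow> e \<le> e' \<Longrightarrow> clopen_partition X K P e'"
  unfolding clopen_partition_def by force

lemma clopen_partition_UN:
  assumes "clopen_partition X K P e" "\<And>Q. Q \<in> P \<Longrightarrow> clopen_partition X Q (R Q) e'"
  shows "clopen_partition X K (\<Union>Q\<in>P. R Q) e'"
proof -
  have fin: "finite P" "\<And>Q. Q \<in> P \<Longrightarrow> finite (R Q)"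
    and union: "\<Union>P = K" "\<And>Q. Q \<in> P \<Longrightarrow> \<Union>(R Q) = Q"
    using assms by (auto simp: clopen_partition_def)
  have "disjoint (\<Union>Q\<in>P. R Q)"
  proof (rule pairwiseI)
    fix A B assume A: "A \<in> (\<Union>Q\<in>P. R Q)" and B: "B \<in> (\<Union>Q\<in>P. R Q)" and "A \<noteq> B"
    then obtain Q Q' where QQ': "Q \<in> P" "A \<in> R Q" "Q' \<in> P" "B \<in> R Q'"
      by blast
    show "disjnt A B"
    proof (cases "Q = Q'")
      case True
      then show ?thesis
        using assms(2)[OF QQ'(1)] QQ' \<open>A \<noteq> B\<close> by (auto simp: clopen_partition_def pairwise_def)
    next
      case False
      then have "disjnt Q Q'"
        using assms(1) QQ'(1,3) by (auto simp: clopen_partition_def pairwise_def)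
      moreover have "A \<subseteq> Q" "B \<subseteq> Q'"
        using union QQ' by blast+
      ultimately show ?thesis
        by (auto simp: disjnt_def)
    qed
  qed
  moreover have "\<Union>(\<Union>Q\<in>P. R Q) = K"
    using union by blast
  moreover have "clopen_in X A \<and> A \<noteq> {} \<and> bounded A \<and> diameter A < e'" if "A \<in> (\<Union>Q\<in>P. R Q)" for A
    using that assms(2) by (auto simp: clopen_partition_def)
  ultimately show ?thesis
    using fin unfolding clopen_partition_def by blast
qed

lemma clopen_partition_from_cover:
  assumes "finite \<C>" "\<And>C. C \<in> \<C> \<Longrightarrow> clopen_in X C \<and> bounded C \<and> diameter C < e"
    and "clopen_in X K" "K \<subseteq> \<Union>\<C>"
  shows "\<exists>P. clopen_partition X K P e"
  using assms
proof (induction \<C> arbitrary: K rule: finite_induct)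
  case empty
  then have "clopen_partition X K {} e"
    by (simp add: clopen_partition_def)
  then show ?case by blast
next
  case (insert C \<C>)
  obtain P where P: "clopen_partition X (K - C) P e"
    using insert by (metis Diff_subset_conv clopen_in_Diff insert_iff Union_insert)
  show ?case
  proof (cases "K \<inter> C = {}")
    case True
    then show ?thesis
      using P by (metis Diff_triv)
  next
    case False
    have C: "clopen_in X C" "bounded C" "diameter C < e"
      using insert.prems(1) by auto
    have "diameter (K \<inter> C) < e"
      using diameter_subset[of "K \<inter> C" C] C by auto
    moreover have "clopen_in X (K \<inter> C)" "bounded (K \<inter> C)"
      using clopen_in_Int insert.prems(2) C bounded_subset by blast+
    moreover have "disjoint (insert (K \<inter> C) P)"
      using P unfolding clopen_partition_def by (auto simp: pairwise_insert disjnt_def)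
    ultimately have "clopen_partition X K (insert (K \<inter> C) P) e"
      using P False unfolding clopen_partition_def by auto
    then show ?thesis by blast
  qed
qed

lemma clopen_partition_exists:
  fixes X :: "'a::metric_space set"
  assumes "compact X" "totally_disconnected_set X" "clopen_in X K" "e > 0"
  shows "\<exists>P. clopen_partition X K P e"
proof -
  have "\<forall>x\<in>K. \<exists>C. clopen_in X C \<and> x \<in> C \<and> C \<subseteq> ball x (e/3)"
    using clopen_in_nhd[OF assms(1,2)] clopen_in_subset[OF assms(3)] assms(4)
    by (metis divide_pos_pos subsetD zero_less_numeral)
  then obtain C where C: "\<And>x. x \<in> K \<Longrightarrow> clopen_in X (C x) \<and> x \<in> C x \<and> C x \<subseteq> ball x (e/3)"
    by metis
  have "\<forall>x\<in>K. \<exists>U. open U \<and> C x = X \<inter> U"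
    using C by (auto simp: clopen_in_def openin_open)
  then obtain U where U: "\<And>x. x \<in> K \<Longrightarrow> open (U x) \<and> C x = X \<inter> U x"
    by metis
  have "compact K"
    using compact_clopen_in assms(1,3) by blast
  moreover have "K \<subseteq> (\<Union>x\<in>K. U x)"
    using C U by blast
  ultimately obtain K' where K': "K' \<subseteq> K" "finite K'" "K \<subseteq> (\<Union>x\<in>K'. U x)"
    using U by (elim compactE_image) auto
  have small: "diameter (C x) < e" "bounded (C x)" if "x \<in> K" for x
  proof -
    have "dist y z \<le> 2 * (e/3)" if "y \<in> C x" "z \<in> C x" for y z
    proof -
      have "dist x y < e/3" "dist x z < e/3"
        using C[OF \<open>x \<in> K\<close>] that by auto
      then show ?thesis
        using dist_triangle[of y z x] by (simp add: dist_commute)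
    qed
    then have "diameter (C x) \<le> 2 * (e/3)"
      using assms(4) by (intro diameter_le_metric) auto
    then show "diameter (C x) < e"
      using assms(4) by linarith
    show "bounded (C x)"
      using C[OF that] bounded_ball bounded_subset by blast
  qed
  have "K \<subseteq> \<Union>(C ` K')"
    using K' U clopen_in_subset[OF assms(3)] by blast
  moreover have "clopen_in X D \<and> bounded D \<and> diameter D < e" if "D \<in> C ` K'" for D
    using that K'(1) C small by blast
  ultimately show ?thesis
    using clopen_partition_from_cover[of "C ` K'" X e K] K'(2) assms(3) by blast
qed

lemma cantor_space_clopen_split:
  assumes "cantor_space X" "clopen_in X R" "R \<noteq> {}"
  obtains A B where "clopen_in X A" "clopen_in X B" "A \<noteq> {}" "B \<noteq> {}" "A \<inter> B = {}" "A \<union> B = R"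
proof -
  obtain a where a: "a \<in> R"
    using assms(3) by auto
  obtain U where U: "open U" "R = X \<inter> U"
    using assms(2) by (auto simp: clopen_in_def openin_open)
  have "a islimpt X"
    using assms(1) a U by (auto simp: cantor_space_def)
  then obtain b where b: "b \<in> X" "b \<in> U" "b \<noteq> a"
    using U a unfolding islimpt_def by blast
  obtain C where C: "clopen_in X C" "a \<in> C" "C \<subseteq> ball a (dist a b)"
    using clopen_in_nhd[of X a "dist a b"] assms(1) a U b by (auto simp: cantor_space_def)
  then have "b \<notin> C"
    by auto
  moreover have "b \<in> R"
    using b U by blast
  ultimately show thesis
    using that[of "R \<inter> C" "R - C"] C assms(2) a clopen_in_Int clopen_in_Diff by blast
qed

lemma clopen_partition_split_piece:
  assumes "cantor_space X" "clopen_partition X K P e" "K \<noteq> {}"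
  shows "\<exists>P'. clopen_partition X K P' e \<and> card P' = Suc (card P)"
proof -
  obtain Q where Q: "Q \<in> P"
    using assms(2,3) by (auto simp: clopen_partition_def)
  then have Qp: "clopen_in X Q" "Q \<noteq> {}" "diameter Q < e" "bounded Q"
    using assms(2) by (auto simp: clopen_partition_def)
  obtain A B where AB: "clopen_in X A" "clopen_in X B" "A \<noteq> {}" "B \<noteq> {}" "A \<inter> B = {}" "A \<union> B = Q"
    using cantor_space_clopen_split[OF assms(1) Qp(1,2)] by blast
  let ?P = "insert A (insert B (P - {Q}))"
  have disj: "\<forall>R\<in>P - {Q}. R \<inter> Q = {}"
    using assms(2) Q by (auto simp: clopen_partition_def pairwise_def disjnt_def)
  have "A \<notin> P - {Q}" "B \<notin> P - {Q}" "A \<noteq> B" "finite P"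
    using disj AB assms(2) by (auto simp: clopen_partition_def)
  then have "card ?P = Suc (Suc (card P - 1))"
    using Q by (simp add: card_Diff_singleton)
  moreover have "card P > 0"
    using Q \<open>finite P\<close> card_gt_0_iff by blast
  ultimately have "card ?P = Suc (card P)"
    by simp
  moreover have "clopen_partition X K ?P e"
  proof -
    have "diameter A \<le> diameter Q" "diameter B \<le> diameter Q" "bounded A" "bounded B"
      using AB Qp diameter_subset bounded_subset by (metis Un_upper1 Un_upper2)+
    moreover have "\<Union>?P = K"
      using assms(2) AB Q by (auto simp: clopen_partition_def)
    moreover have "disjoint ?P"
      using assms(2) AB disj by (auto simp: clopen_partition_def pairwise_def disjnt_def)
    ultimately show ?thesis
      using assms(2) AB Qp unfolding clopen_partition_def by auto
  qed
  ultimately show ?thesis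
    by blast
qed

lemma clopen_partition_card:
  assumes "cantor_space X" "clopen_in X K" "K \<noteq> {}" "e > 0"
  shows "\<exists>N. \<forall>c\<ge>N. \<exists>P. clopen_partition X K P e \<and> card P = c"
proof -
  obtain P0 where P0: "clopen_partition X K P0 e"
    using clopen_partition_exists[of X K e] assms unfolding cantor_space_def by blast
  have "\<exists>P. clopen_partition X K P e \<and> card P = c" if "card P0 \<le> c" for c
    using that
  proof (induction c rule: dec_induct)
    case base
    then show ?case
      using P0 by blast
  next
    case (step c)
    then show ?case
      using clopen_partition_split_piece[OF assms(1) _ assms(3)] by metis
  qed
  then show ?thesis
    by blast
qed

lemma setdist_gt_0_compact:
  fixes A B :: "'a::metric_space set"
  assumes "compact A" "compact B" "A \<noteq> {}" "B \<noteq> {}" "A \<inter> B = {}"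
  shows "setdist A B > 0"
proof -
  obtain y where y: "y \<in> B" "setdist A B = infdist y A"
    using setdist_attains_inf[OF assms(2,4)] by blast
  then have "y \<notin> A"
    using assms(5) by auto
  then show ?thesis
    using y(2) infdist_pos_not_in_closed[of A y] compact_imp_closed[OF assms(1)] assms(3) by simp
qed

lemma clopen_partition_separated:
  assumes "compact X" "clopen_partition X K P e"
  obtains \<delta> where "\<delta> > 0" "\<And>Q R. Q \<in> P \<Longrightarrow> R \<in> P \<Longrightarrow> Q \<noteq> R \<Longrightarrow> \<delta> \<le> setdist Q R"
proof -
  define D where "D = (\<lambda>(Q, R). setdist Q R) ` (SIGMA Q:P. P - {Q})"
  have "finite P"
    using assms(2) unfolding clopen_partition_def by blast
  then have "finite D"
    unfolding D_def by simp
  have pos: "setdist Q R > 0" if QR: "Q \<in> P" "R \<in> P" "Q \<noteq> R" for Q R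
  proof (rule setdist_gt_0_compact)
    have "clopen_in X Q" "clopen_in X R"
      using assms(2) QR(1,2) unfolding clopen_partition_def by blast+
    then show "compact Q" "compact R"
      using compact_clopen_in[OF assms(1)] by blast+
    show "Q \<noteq> {}" "R \<noteq> {}"
      using assms(2) QR(1,2) unfolding clopen_partition_def by blast+
    show "Q \<inter> R = {}"
      using clopen_partition_unique[OF assms(2) QR(1,2)] QR(3) by blast
  qed
  have "Min (insert 1 D) > 0"
    using \<open>finite D\<close> pos unfolding D_def by (auto simp: Min_gr_iff)
  moreover have "Min (insert 1 D) \<le> setdist Q R" if "Q \<in> P" "R \<in> P" "Q \<noteq> R" for Q R
    using \<open>finite D\<close> that by (intro Min_le) (auto simp: D_def)
  ultimately show thesis
    using that by blast
qed

section \<open>Permutations with exact periods\<close>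

locale exact_periods =
  fixes P :: "'b set" and \<sigma> :: "'b \<Rightarrow> 'b" and per :: "'b \<Rightarrow> nat"
  assumes maps_to: "Q \<in> P \<Longrightarrow> \<sigma> Q \<in> P"
    and period_pos: "Q \<in> P \<Longrightarrow> per Q > 0"
    and funpow_eq_self_iff: "Q \<in> P \<Longrightarrow> (\<sigma> ^^ m) Q = Q \<longleftrightarrow> per Q dvd m"
begin

lemma funpow_in: "Q \<in> P \<Longrightarrow> (\<sigma> ^^ i) Q \<in> P"
  by (induction i) (auto simp: maps_to)

lemma funpow_period: "Q \<in> P \<Longrightarrow> (\<sigma> ^^ per Q) Q = Q"
  by (simp add: funpow_eq_self_iff)

lemma funpow_period_mult: "Q \<in> P \<Longrightarrow> (\<sigma> ^^ (per Q * k)) Q = Q"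
  by (simp add: funpow_eq_self_iff)

lemma funpow_cancel:
  assumes "Q \<in> P" "(\<sigma> ^^ a) Q = (\<sigma> ^^ b) Q" "a \<le> b"
  shows "(\<sigma> ^^ (b - a)) Q = Q"
proof -
  have "(\<sigma> ^^ (b - a)) Q = (\<sigma> ^^ (b - a)) ((\<sigma> ^^ (per Q * a)) Q)"
    using funpow_period_mult[OF assms(1)] by simp
  also have "\<dots> = (\<sigma> ^^ ((per Q - 1) * a)) ((\<sigma> ^^ b) Q)"
  proof -
    have "b - a + per Q * a = (per Q - 1) * a + b"
      using period_pos[OF assms(1)] assms(3) by (cases "per Q") (auto simp: algebra_simps)
    then show ?thesis
      by (metis comp_apply funpow_add)
  qed
  also have "\<dots> = (\<sigma> ^^ ((per Q - 1) * a + a)) Q"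
    using assms(2) by (simp add: funpow_add)
  also have "(per Q - 1) * a + a = per Q * a"
    using period_pos[OF assms(1)] by (cases "per Q") auto
  finally show ?thesis
    using funpow_period_mult[OF assms(1)] by simp
qed

lemma funpow_eq_iff_mod:
  assumes "Q \<in> P"
  shows "(\<sigma> ^^ a) Q = (\<sigma> ^^ b) Q \<longleftrightarrow> a mod per Q = b mod per Q"
proof
  have mod: "(\<sigma> ^^ (n mod per Q)) Q = (\<sigma> ^^ n) Q" for n
    using funpow_period[OF assms] by (rule funpow_mod_eq)
  assume "a mod per Q = b mod per Q"
  then show "(\<sigma> ^^ a) Q = (\<sigma> ^^ b) Q"
    using mod[of a] mod[of b] by simp
next
  have *: "a mod per Q = b mod per Q" if "(\<sigma> ^^ a) Q = (\<sigma> ^^ b) Q" "a \<le> b" for a b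
  proof -
    have "per Q dvd b - a"
      using funpow_cancel[OF assms that] funpow_eq_self_iff[OF assms] by blast
    then show ?thesis
      using mod_eq_dvd_iff_nat[OF that(2), of "per Q"] by simp
  qed
  assume eq: "(\<sigma> ^^ a) Q = (\<sigma> ^^ b) Q"
  show "a mod per Q = b mod per Q"
  proof (cases "a \<le> b")
    case True
    then show ?thesis
      using *[OF eq] by blast
  next
    case False
    then show ?thesis
      using *[OF eq[symmetric]] by simp
  qed
qed

text \<open>Injectivity need not be assumed: it follows from every point being periodic.\<close>
lemma inj: "inj_on \<sigma> P"
proof (rule inj_onI)
  fix Q R assume QR: "Q \<in> P" "R \<in> P" "\<sigma> Q = \<sigma> R"
  define n where "n = per Q * per R - 1"
  have "Suc n = per Q * per R"
    using period_pos QR(1,2) unfolding n_def by simp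
  then have "(\<sigma> ^^ Suc n) Q = Q" "(\<sigma> ^^ Suc n) R = R"
    using QR funpow_eq_self_iff by simp_all
  then show "Q = R"
    using QR(3) by (metis funpow_Suc_right o_apply)
qed

lemma period_step: "Q \<in> P \<Longrightarrow> per (\<sigma> Q) = per Q"
proof -
  assume Q: "Q \<in> P"
  have "(\<sigma> ^^ m) (\<sigma> Q) = \<sigma> Q \<longleftrightarrow> (\<sigma> ^^ m) Q = Q" for m
    using inj funpow_in[OF Q] maps_to Q unfolding inj_on_def by (metis funpow_swap1)
  then have "per (\<sigma> Q) dvd m \<longleftrightarrow> per Q dvd m" for m
    using funpow_eq_self_iff Q maps_to by blast
  then show ?thesis
    by (meson dvd_antisym dvd_refl)
qed

lemma period_funpow: "Q \<in> P \<Longrightarrow> per ((\<sigma> ^^ i) Q) = per Q"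
  by (induction i) (auto simp: period_step funpow_in)

definition orbit_rep :: "'b \<Rightarrow> 'b" where
  "orbit_rep Q = (SOME R. R \<in> range (\<lambda>k. (\<sigma> ^^ k) Q))"

definition orbit_index :: "'b \<Rightarrow> nat" where
  "orbit_index Q = (LEAST j. (\<sigma> ^^ j) (orbit_rep Q) = Q)"

lemma orbit_step: "Q \<in> P \<Longrightarrow> range (\<lambda>k. (\<sigma> ^^ k) (\<sigma> Q)) = range (\<lambda>k. (\<sigma> ^^ k) Q)"
proof -
  assume Q: "Q \<in> P"
  have "(\<sigma> ^^ k) Q = (\<sigma> ^^ (k + per Q - 1)) (\<sigma> Q)" for k
  proof -
    have "(\<sigma> ^^ k) Q = (\<sigma> ^^ (k + per Q)) Q"
      by (metis Q funpow_mod_eq funpow_period mod_add_self2)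
    also have "k + per Q = Suc (k + per Q - 1)"
      using period_pos[OF Q] by simp
    finally show ?thesis
      by (metis funpow_Suc_right o_apply)
  qed
  note shift = this
  show ?thesis
  proof (intro subset_antisym image_subsetI)
    fix k
    show "(\<sigma> ^^ k) (\<sigma> Q) \<in> range (\<lambda>k. (\<sigma> ^^ k) Q)"
      using rangeI[of "\<lambda>k. (\<sigma> ^^ k) Q" "Suc k"] by (simp add: funpow_swap1)
    show "(\<sigma> ^^ k) Q \<in> range (\<lambda>k. (\<sigma> ^^ k) (\<sigma> Q))"
      by (subst shift[of k]) (rule rangeI)
  qed
qed

lemma orbit_rep_funpow: "\<exists>k. orbit_rep Q = (\<sigma> ^^ k) Q"
proof -
  have "orbit_rep Q \<in> range (\<lambda>k. (\<sigma> ^^ k) Q)"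
    unfolding orbit_rep_def by (rule someI[of _ Q]) (metis funpow_0 rangeI)
  then show ?thesis
    by blast
qed

lemma orbit_rep_step: "Q \<in> P \<Longrightarrow> orbit_rep (\<sigma> Q) = orbit_rep Q"
  unfolding orbit_rep_def by (simp add: orbit_step)

lemma orbit_rep_in: "Q \<in> P \<Longrightarrow> orbit_rep Q \<in> P"
  using orbit_rep_funpow funpow_in by metis

lemma period_orbit_rep: "Q \<in> P \<Longrightarrow> per (orbit_rep Q) = per Q"
  using orbit_rep_funpow period_funpow by metis

lemma orbit_index:
  assumes Q: "Q \<in> P"
  shows "(\<sigma> ^^ orbit_index Q) (orbit_rep Q) = Q" "orbit_index Q < per Q"
proof -
  obtain k where k: "orbit_rep Q = (\<sigma> ^^ k) Q"
    using orbit_rep_funpow by blast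
  have "per Q * k - k + k = per Q * k"
    using period_pos[OF Q] by simp
  then have "(\<sigma> ^^ (per Q * k - k)) (orbit_rep Q) = (\<sigma> ^^ (per Q * k)) Q"
    using k by (metis funpow_add o_apply)
  then have "(\<sigma> ^^ (per Q * k - k)) (orbit_rep Q) = Q"
    using funpow_period_mult[OF Q] by simp
  then show first: "(\<sigma> ^^ orbit_index Q) (orbit_rep Q) = Q"
    unfolding orbit_index_def by (rule LeastI)
  have "(\<sigma> ^^ (orbit_index Q mod per Q)) (orbit_rep Q) = Q"
    using first funpow_mod_eq funpow_period orbit_rep_in[OF Q] period_orbit_rep[OF Q] by metis
  then have "orbit_index Q \<le> orbit_index Q mod per Q"
    unfolding orbit_index_def by (rule Least_le)
  then show "orbit_index Q < per Q"
    using period_pos[OF Q] by (meson le_less_trans mod_less_divisor)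
qed

lemma orbit_index_step:
  assumes Q: "Q \<in> P"
  shows "orbit_index (\<sigma> Q) = Suc (orbit_index Q) mod per Q"
proof -
  have R: "orbit_rep Q \<in> P" "per (orbit_rep Q) = per Q"
    using orbit_rep_in[OF Q] period_orbit_rep[OF Q] by auto
  have "(\<sigma> ^^ Suc (orbit_index Q)) (orbit_rep Q) = \<sigma> Q"
    using orbit_index(1)[OF Q] by simp
  moreover have "(\<sigma> ^^ orbit_index (\<sigma> Q)) (orbit_rep Q) = \<sigma> Q"
    using orbit_index(1)[OF maps_to[OF Q]] orbit_rep_step[OF Q] by simp
  ultimately have "orbit_index (\<sigma> Q) mod per Q = Suc (orbit_index Q) mod per Q"
    by (metis R funpow_eq_iff_mod)
  then show ?thesis
    using orbit_index(2)[OF maps_to[OF Q]] period_step[OF Q] by simp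
qed

end

text \<open>One periodic point per piece is kept for a chosen representative of each cycle of pieces
  and transported along the cycle by \<open>F\<close>.\<close>
lemma equivariant_section:
  fixes P :: "'a set set"
  assumes "exact_periods P \<sigma> per"
    and F: "\<And>Q x. Q \<in> P \<Longrightarrow> x \<in> Q \<Longrightarrow> F x \<in> \<sigma> Q"
    and q: "\<And>Q. Q \<in> P \<Longrightarrow> q Q \<in> Q \<and> (F ^^ per Q) (q Q) = q Q"
  obtains p where "\<And>Q. Q \<in> P \<Longrightarrow> p Q \<in> Q" "\<And>Q. Q \<in> P \<Longrightarrow> F (p Q) = p (\<sigma> Q)"
proof -
  interpret exact_periods P \<sigma> per
    by (fact assms(1))
  define p where "p Q = (F ^^ orbit_index Q) (q (orbit_rep Q))" for Q
  have F_funpow: "(F ^^ i) x \<in> (\<sigma> ^^ i) R" if "R \<in> P" "x \<in> R" for R x i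
    using that by (induction i) (auto simp: F funpow_in)
  have "p Q \<in> Q" if Q: "Q \<in> P" for Q
  proof -
    have "p Q \<in> (\<sigma> ^^ orbit_index Q) (orbit_rep Q)"
      unfolding p_def using F_funpow orbit_rep_in[OF Q] q by blast
    then show ?thesis
      by (simp add: orbit_index(1)[OF Q])
  qed
  moreover have "F (p Q) = p (\<sigma> Q)" if Q: "Q \<in> P" for Q
  proof (cases "Suc (orbit_index Q) < per Q")
    case True
    then show ?thesis
      unfolding p_def using orbit_index_step[OF Q] orbit_rep_step[OF Q] by simp
  next
    case False
    then have last: "Suc (orbit_index Q) = per Q"
      using orbit_index(2)[OF Q] by simp
    have "F (p Q) = (F ^^ per Q) (q (orbit_rep Q))"
      unfolding p_def last[symmetric] by simp
    also have "\<dots> = q (orbit_rep Q)"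
      using q[OF orbit_rep_in[OF Q]] period_orbit_rep[OF Q] by simp
    also have "\<dots> = p (\<sigma> Q)"
      unfolding p_def using orbit_index_step[OF Q] orbit_rep_step[OF Q] last by simp
    finally show ?thesis .
  qed
  ultimately show thesis
    using that by blast
qed

lemma exact_periods_id: "exact_periods A id (\<lambda>_. 1)"
  by unfold_locales (simp_all add: id_funpow)

lemma dvd_mult_iff_div_gcd:
  fixes a k m :: nat
  assumes "a > 0"
  shows "a dvd k * m \<longleftrightarrow> a div gcd a k dvd m"
proof -
  define g where "g = gcd a k"
  have g: "g > 0" "a = g * (a div g)" "k = g * (k div g)"
    using assms by (simp_all add: g_def)
  have "coprime (a div g) (k div g)"
    using assms by (simp add: g_def div_gcd_coprime)
  have "a dvd k * m \<longleftrightarrow> g * (a div g) dvd g * ((k div g) * m)"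
    using g by (metis mult.assoc)
  also have "\<dots> \<longleftrightarrow> a div g dvd (k div g) * m"
    using g(1) by simp
  also have "\<dots> \<longleftrightarrow> a div g dvd m"
    using \<open>coprime (a div g) (k div g)\<close> by (simp add: coprime_dvd_mult_right_iff)
  finally show ?thesis
    unfolding g_def .
qed

lemma exact_periods_funpow:
  assumes "exact_periods P \<sigma> per"
  shows "exact_periods P (\<sigma> ^^ k) (\<lambda>Q. per Q div gcd (per Q) k)"
proof -
  interpret exact_periods P \<sigma> per
    by (fact assms)
  show ?thesis
  proof
    fix Q m assume Q: "Q \<in> P"
    show "(\<sigma> ^^ k) Q \<in> P"
      using funpow_in[OF Q] .
    show "per Q div gcd (per Q) k > 0"
      using period_pos[OF Q] by (simp add: div_greater_zero_iff gcd_le1_nat)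
    show "((\<sigma> ^^ k) ^^ m) Q = Q \<longleftrightarrow> per Q div gcd (per Q) k dvd m"
      using funpow_eq_self_iff[OF Q] dvd_mult_iff_div_gcd[OF period_pos[OF Q]] by (simp add: funpow_mult)
  qed
qed

lemma exact_periods_skew_product:
  assumes "exact_periods P \<sigma> per"
    and t_step: "\<And>Q. Q \<in> P \<Longrightarrow> t (\<sigma> Q) = t Q"
    and t: "\<And>Q. Q \<in> P \<Longrightarrow> exact_periods I (t Q) (k Q)"
  shows "exact_periods (P \<times> I) (\<lambda>(Q, i). (\<sigma> Q, t Q i)) (\<lambda>(Q, i). lcm (per Q) (k Q i))"
proof -
  interpret exact_periods P \<sigma> per
    by (fact assms(1))
  have funpow: "((\<lambda>(Q, i). (\<sigma> Q, t Q i)) ^^ m) (Q, i) = ((\<sigma> ^^ m) Q, (t Q ^^ m) i)"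
    if "Q \<in> P" for Q i m
  proof (induction m)
    case (Suc m)
    have "t ((\<sigma> ^^ m) Q) = t Q"
      using that by (induction m) (auto simp: t_step funpow_in)
    then show ?case
      using Suc by simp
  qed simp
  show ?thesis
  proof
    fix x m assume "x \<in> P \<times> I"
    then obtain Q i where x: "x = (Q, i)" "Q \<in> P" "i \<in> I"
      by blast
    interpret t: exact_periods I "t Q" "k Q"
      using t[OF x(2)] .
    show "(\<lambda>(Q, i). (\<sigma> Q, t Q i)) x \<in> P \<times> I"
      using x maps_to t.maps_to by auto
    show "(\<lambda>(Q, i). lcm (per Q) (k Q i)) x > 0"
      using x period_pos t.period_pos by (simp add: lcm_pos_nat)
    have "((\<lambda>(Q, i). (\<sigma> Q, t Q i)) ^^ m) x = x \<longleftrightarrow> (\<sigma> ^^ m) Q = Q \<and> (t Q ^^ m) i = i"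
      using funpow[OF x(2)] x(1) by simp
    also have "\<dots> \<longleftrightarrow> per Q dvd m \<and> k Q i dvd m"
      using funpow_eq_self_iff[OF x(2)] t.funpow_eq_self_iff[OF x(3)] by blast
    finally show "((\<lambda>(Q, i). (\<sigma> Q, t Q i)) ^^ m) x = x \<longleftrightarrow> (\<lambda>(Q, i). lcm (per Q) (k Q i)) x dvd m"
      using x(1) by simp
  qed
qed

lemma exact_periods_image:
  assumes "exact_periods A \<phi> p" "inj_on C A"
  shows "exact_periods (C ` A) (\<lambda>x. C (\<phi> (inv_into A C x))) (\<lambda>x. p (inv_into A C x))"
proof -
  interpret exact_periods A \<phi> p
    by (fact assms(1))
  have funpow: "((\<lambda>x. C (\<phi> (inv_into A C x))) ^^ m) (C a) = C ((\<phi> ^^ m) a)" if "a \<in> A" for a m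
    by (induction m) (simp_all add: assms(2) that funpow_in)
  show ?thesis
  proof
    fix x m assume "x \<in> C ` A"
    then obtain a where a: "a \<in> A" "x = C a"
      by blast
    then have inv: "inv_into A C x = a"
      using assms(2) by simp
    show "C (\<phi> (inv_into A C x)) \<in> C ` A" "p (inv_into A C x) > 0"
      using a(1) inv maps_to period_pos by auto
    have "((\<lambda>x. C (\<phi> (inv_into A C x))) ^^ m) x = x \<longleftrightarrow> C ((\<phi> ^^ m) a) = C a"
      using funpow[OF a(1)] a(2) by simp
    also have "\<dots> \<longleftrightarrow> (\<phi> ^^ m) a = a"
      using inj_on_eq_iff[OF assms(2) funpow_in[OF a(1)] a(1)] .
    also have "\<dots> \<longleftrightarrow> p a dvd m"
      using funpow_eq_self_iff[OF a(1)] .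
    finally show "((\<lambda>x. C (\<phi> (inv_into A C x))) ^^ m) x = x \<longleftrightarrow> p (inv_into A C x) dvd m"
      using inv by simp
  qed
qed

lemma exact_periods_enumerated_refinement:
  assumes \<sigma>: "exact_periods P \<sigma> per" and inj: "inj_on (\<lambda>(Q, i). C Q i) (P \<times> I)"
    and t: "\<And>Q. Q \<in> P \<Longrightarrow> t (\<sigma> Q) = t Q" "\<And>Q. Q \<in> P \<Longrightarrow> exact_periods I (t Q) (k Q)"
  obtains \<sigma>' per' where "exact_periods ((\<lambda>(Q, i). C Q i) ` (P \<times> I)) \<sigma>' per'"
    and "\<And>Q i. Q \<in> P \<Longrightarrow> i \<in> I \<Longrightarrow> \<sigma>' (C Q i) = C (\<sigma> Q) (t Q i)"
    and "\<And>Q i. Q \<in> P \<Longrightarrow> i \<in> I \<Longrightarrow> per' (C Q i) = lcm (per Q) (k Q i)"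
proof -
  let ?C = "\<lambda>(Q, i). C Q i"
  let ?\<phi> = "\<lambda>(Q, i). (\<sigma> Q, t Q i)" and ?p = "\<lambda>(Q, i). lcm (per Q) (k Q i)"
  have inv: "inv_into (P \<times> I) ?C (C Q i) = (Q, i)" if "Q \<in> P" "i \<in> I" for Q i
    using inv_into_f_f[OF inj, of "(Q, i)"] that by simp
  show thesis
  proof (rule that)
    show "exact_periods (?C ` (P \<times> I)) (\<lambda>x. ?C (?\<phi> (inv_into (P \<times> I) ?C x))) (\<lambda>x. ?p (inv_into (P \<times> I) ?C x))"
      using exact_periods_image[OF exact_periods_skew_product[of P \<sigma> per t I k, OF \<sigma> t] inj] .
  qed (simp_all add: inv)
qed

section \<open>Criteria for topological stability\<close>

lemma inv_into_homeomorphism: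
  assumes "homeomorphism X X f g" "y \<in> X"
  shows "inv_into X f y = g y"
proof -
  have "inj_on f X"
    using assms(1) by (metis homeomorphism_apply1 inj_on_inverseI)
  moreover have "g y \<in> X" "f (g y) = y"
    using assms homeomorphism_image2 homeomorphism_apply2 by blast+
  ultimately show ?thesis
    by (metis inv_into_f_f)
qed

lemma homeomorphism_funpow: "homeomorphism X X f g \<Longrightarrow> homeomorphism X X (f ^^ n) (g ^^ n)"
proof (induction n)
  case 0
  then show ?case
    by (simp add: id_def homeomorphism_ident)
next
  case (Suc n)
  then have "homeomorphism X X (f \<circ> (f ^^ n)) ((g ^^ n) \<circ> g)"
    using homeomorphism_compose by blast
  then show ?case
    by (metis funpow.simps(2) funpow_Suc_right)
qed

lemma homeomorphism_maps_to: "homeomorphism X X f g \<Longrightarrow> x \<in> X \<Longrightarrow> f x \<in> X"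
  using homeomorphism_image1 by blast

lemma homeos_funpow: "f \<in> homeos X \<Longrightarrow> f ^^ n \<in> homeos X"
  unfolding homeos_def using homeomorphism_funpow by blast

lemma dist_le_dC0:
  assumes "compact X" "continuous_on X f" "continuous_on X g" "x \<in> X"
  shows "dist (f x) (g x) \<le> dC0 X f g"
proof -
  have "compact ((\<lambda>x. dist (f x) (g x)) ` X)"
    using assms by (intro compact_continuous_image continuous_intros)
  then have "bdd_above ((\<lambda>x. dist (f x) (g x)) ` X)"
    by (simp add: bounded_imp_bdd_above compact_imp_bounded)
  then show ?thesis
    unfolding dC0_def using assms(4) by (rule cSUP_upper2) simp
qed

lemma dC0_le:
  assumes "X \<noteq> {}" "\<And>x. x \<in> X \<Longrightarrow> dist (f x) (g x) \<le> M"
  shows "dC0 X f g \<le> M"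
  unfolding dC0_def using assms by (intro cSUP_least) auto

lemma continuous_on_constant_on_pieces:
  fixes h :: "'a::metric_space \<Rightarrow> 'b::metric_space"
  assumes "clopen_partition X X P e" "\<And>Q x y. Q \<in> P \<Longrightarrow> x \<in> Q \<Longrightarrow> y \<in> Q \<Longrightarrow> h x = h y"
  shows "continuous_on X h"
  unfolding continuous_on_iff
proof (intro ballI allI impI)
  fix x and r :: real assume x: "x \<in> X" and "r > 0"
  let ?Q = "piece_of P x"
  have Q: "?Q \<in> P" "x \<in> ?Q"
    using piece_of[OF assms(1) x] by auto
  then obtain T where T: "open T" "?Q = X \<inter> T"
    using assms(1) unfolding clopen_partition_def clopen_in_def openin_open by blast
  then obtain d where d: "d > 0" "ball x d \<subseteq> T"
    using Q(2) open_contains_ball by blast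
  have "dist (h y) (h x) < r" if "y \<in> X" "dist y x < d" for y
  proof -
    have "y \<in> ?Q"
      using that d T by (auto simp: dist_commute)
    then show ?thesis
      using assms(2)[OF Q(1) _ Q(2)] \<open>r > 0\<close> by simp
  qed
  then show "\<exists>d>0. \<forall>y\<in>X. dist y x < d \<longrightarrow> dist (h y) (h x) < r"
    using d(1) by blast
qed

lemma semiconjugacy_from_section:
  assumes P: "clopen_partition X X P \<epsilon>" "X \<noteq> {}"
    and \<pi>: "\<And>Q. Q \<in> P \<Longrightarrow> \<pi> Q \<in> P"
    and p: "\<And>Q. Q \<in> P \<Longrightarrow> p Q \<in> Q" "\<And>Q. Q \<in> P \<Longrightarrow> F (p Q) = p (\<pi> Q)"
    and g: "\<And>Q x. Q \<in> P \<Longrightarrow> x \<in> Q \<Longrightarrow> g x \<in> \<pi> Q"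
  shows "\<exists>h. continuous_on X h \<and> h ` X \<subseteq> X \<and> dC0 X h id < \<epsilon> \<and> (\<forall>x\<in>X. h (g x) = F (h x))"
proof -
  define h where "h x = p (piece_of P x)" for x
  have piece: "piece_of P x \<in> P" "x \<in> piece_of P x" if "x \<in> X" for x
    using piece_of[OF P(1) that] by auto
  have "continuous_on X h"
    using P(1) unfolding h_def
    by (rule continuous_on_constant_on_pieces) (simp add: piece_of_eq[OF P(1)])
  have h_in: "h x \<in> piece_of P x" if "x \<in> X" for x
    unfolding h_def using p(1) piece[OF that] by blast
  then have "h ` X \<subseteq> X"
    using piece P(1) unfolding clopen_partition_def by blast
  have "finite P" "P \<noteq> {}" and small: "\<And>Q. Q \<in> P \<Longrightarrow> bounded Q \<and> diameter Q < \<epsilon>"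
    using P unfolding clopen_partition_def by auto
  then have "Max (diameter ` P) < \<epsilon>"
    by simp
  moreover have "dC0 X h id \<le> Max (diameter ` P)"
  proof (rule dC0_le[OF P(2)])
    fix x assume x: "x \<in> X"
    have "dist (h x) (id x) \<le> diameter (piece_of P x)"
      using h_in[OF x] piece[OF x] small by (simp add: diameter_bounded_bound)
    also have "\<dots> \<le> Max (diameter ` P)"
      using \<open>finite P\<close> piece[OF x] by simp
    finally show "dist (h x) (id x) \<le> Max (diameter ` P)" .
  qed
  moreover have "h (g x) = F (h x)" if x: "x \<in> X" for x
  proof -
    have "piece_of P (g x) = \<pi> (piece_of P x)"
      using piece_of_eq[OF P(1) \<pi> g] piece[OF x] by blast
    then show "h (g x) = F (h x)"
      unfolding h_def using p(2) piece[OF x] by simp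
  qed
  ultimately show ?thesis
    using \<open>continuous_on X h\<close> \<open>h ` X \<subseteq> X\<close> by force
qed

lemma dist_less_Dist_H:
  assumes "compact X" "f \<in> homeos X" "g \<in> homeos X" "Dist_H X f g < \<delta>" "x \<in> X"
  shows "dist (f x) (g x) < \<delta>"
proof -
  obtain f' g' where "homeomorphism X X f f'" "homeomorphism X X g g'"
    using assms(2,3) unfolding homeos_def by blast
  then have "dist (f x) (g x) \<le> dC0 X f g"
    using dist_le_dC0[OF assms(1) _ _ assms(5)] homeomorphism_cont1 by blast
  then show ?thesis
    using assms(4) unfolding Dist_H_def by linarith
qed

text \<open>Distinct pieces are at least \<open>\<delta>\<close> apart, so a map \<open>\<delta>\<close>-close to \<open>F\<close> sends each piece into the
  same piece as \<open>F\<close> does.\<close>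
lemma close_map_follows_pieces:
  assumes P: "clopen_partition X X P e" and \<pi>: "\<And>Q. Q \<in> P \<Longrightarrow> \<pi> Q \<in> P"
    and sep: "\<And>Q R. Q \<in> P \<Longrightarrow> R \<in> P \<Longrightarrow> Q \<noteq> R \<Longrightarrow> \<delta> \<le> setdist Q R"
    and F: "\<And>Q x. Q \<in> P \<Longrightarrow> x \<in> Q \<Longrightarrow> F x \<in> \<pi> Q"
    and g: "\<And>x. x \<in> X \<Longrightarrow> g x \<in> X" "\<And>x. x \<in> X \<Longrightarrow> dist (F x) (g x) < \<delta>"
    and Qx: "Q \<in> P" "x \<in> Q"
  shows "g x \<in> \<pi> Q"
proof (rule ccontr)
  have x: "x \<in> X"
    using P Qx unfolding clopen_partition_def by blast
  let ?R = "piece_of P (g x)"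
  have R: "?R \<in> P" "g x \<in> ?R"
    using piece_of[OF P g(1)[OF x]] by auto
  assume "g x \<notin> \<pi> Q"
  then have "\<delta> \<le> setdist ?R (\<pi> Q)"
    using sep R \<pi>[OF Qx(1)] by blast
  also have "\<dots> \<le> dist (g x) (F x)"
    using setdist_le_dist[OF R(2) F[OF Qx]] .
  finally show False
    using g(2)[OF x] by (simp add: dist_commute)
qed

lemma topologically_stable_if_periodic_partitions:
  fixes F :: "'a::metric_space \<Rightarrow> 'a"
  assumes X: "compact X" "X \<noteq> {}" and F: "F \<in> homeos X"
    and partitions: "\<And>\<epsilon>. \<epsilon> > 0 \<Longrightarrow> \<exists>P \<pi> per. clopen_partition X X P \<epsilon> \<and> exact_periods P \<pi> per
        \<and> (\<forall>Q\<in>P. \<forall>x\<in>Q. F x \<in> \<pi> Q) \<and> (\<forall>Q\<in>P. \<exists>q\<in>Q. (F ^^ per Q) q = q)"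
  shows "topologically_stable X F"
  unfolding topologically_stable_def
proof (intro allI impI)
  fix \<epsilon> :: real assume "\<epsilon> > 0"
  then obtain P \<pi> per where P: "clopen_partition X X P \<epsilon>" and \<pi>: "exact_periods P \<pi> per"
    and F_maps: "\<And>Q x. Q \<in> P \<Longrightarrow> x \<in> Q \<Longrightarrow> F x \<in> \<pi> Q"
    and periodic: "\<And>Q. Q \<in> P \<Longrightarrow> \<exists>q\<in>Q. (F ^^ per Q) q = q"
    using partitions by meson
  have "\<forall>Q\<in>P. \<exists>q. q \<in> Q \<and> (F ^^ per Q) q = q"
    using periodic by blast
  then obtain q where q: "\<And>Q. Q \<in> P \<Longrightarrow> q Q \<in> Q \<and> (F ^^ per Q) (q Q) = q Q"
    by (metis bchoice)
  obtain p where p: "\<And>Q. Q \<in> P \<Longrightarrow> p Q \<in> Q" "\<And>Q. Q \<in> P \<Longrightarrow> F (p Q) = p (\<pi> Q)"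
    using equivariant_section[OF \<pi> F_maps q] by blast
  obtain \<delta> where \<delta>: "\<delta> > 0" "\<And>Q R. Q \<in> P \<Longrightarrow> R \<in> P \<Longrightarrow> Q \<noteq> R \<Longrightarrow> \<delta> \<le> setdist Q R"
    using clopen_partition_separated[OF X(1) P] by blast
  have "\<exists>h. continuous_on X h \<and> h ` X \<subseteq> X \<and> dC0 X h id < \<epsilon> \<and> (\<forall>x\<in>X. h (g x) = F (h x))"
    if g: "g \<in> homeos X" "Dist_H X F g < \<delta>" for g
  proof (rule semiconjugacy_from_section[of X P \<epsilon> \<pi> p F g, OF P X(2) exact_periods.maps_to[OF \<pi>] p])
    have gX: "\<And>x. x \<in> X \<Longrightarrow> g x \<in> X"
      using g(1) homeomorphism_maps_to unfolding homeos_def by blast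
    show "g x \<in> \<pi> Q" if "Q \<in> P" "x \<in> Q" for Q x
      using close_map_follows_pieces[of X P \<epsilon> \<pi> \<delta> F g, OF P exact_periods.maps_to[OF \<pi>] \<delta>(2) F_maps gX
          dist_less_Dist_H[OF X(1) F g] that] .
  qed
  then show "\<exists>\<delta>>0. \<forall>g\<in>homeos X. Dist_H X F g < \<delta> \<longrightarrow>
      (\<exists>h. continuous_on X h \<and> h ` X \<subseteq> X \<and> dC0 X h id < \<epsilon> \<and> (\<forall>x\<in>X. h (g x) = F (h x)))"
    using \<delta>(1) by blast
qed

lemma semiconjugacy_funpow:
  assumes "\<And>x. x \<in> X \<Longrightarrow> g x \<in> X" "\<And>x. x \<in> X \<Longrightarrow> h (g x) = f (h x)" "x \<in> X"
  shows "h ((g ^^ n) x) = (f ^^ n) (h x)"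
proof -
  have "(g ^^ n) x \<in> X" for n
    by (induction n) (simp_all add: assms(1,3))
  then show ?thesis
    by (induction n) (simp_all add: assms(2))
qed

text \<open>Periods of points can only shrink to divisors under a semiconjugacy, so a map all of whose
  periods are multiples of 3 is not stable when perturbations create other periods.\<close>
lemma not_topologically_stable_if_new_periods:
  fixes f :: "'a::metric_space \<Rightarrow> 'a"
  assumes periods: "\<And>x m. x \<in> X \<Longrightarrow> 0 < m \<Longrightarrow> (f ^^ m) x = x \<Longrightarrow> 3 dvd m"
    and perturb: "\<And>\<delta>. \<delta> > 0 \<Longrightarrow> \<exists>g\<in>homeos X. Dist_H X f g < \<delta> \<and> (\<exists>x\<in>X. \<exists>m>0. \<not> 3 dvd m \<and> (g ^^ m) x = x)"
  shows "\<not> topologically_stable X f"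
proof
  assume "topologically_stable X f"
  then obtain \<delta> where \<delta>: "\<delta> > 0" and stable: "\<forall>g\<in>homeos X. Dist_H X f g < \<delta> \<longrightarrow>
      (\<exists>h. continuous_on X h \<and> h ` X \<subseteq> X \<and> dC0 X h id < 1 \<and> (\<forall>x\<in>X. h (g x) = f (h x)))"
    unfolding topologically_stable_def using zero_less_one by blast
  obtain g x m where g: "g \<in> homeos X" "Dist_H X f g < \<delta>"
    and x: "x \<in> X" "m > 0" "\<not> 3 dvd m" "(g ^^ m) x = x"
    using perturb[OF \<delta>] by blast
  obtain h where h: "h ` X \<subseteq> X" "\<forall>x\<in>X. h (g x) = f (h x)"
    using stable g by blast
  have "\<And>x. x \<in> X \<Longrightarrow> g x \<in> X"
    using g(1) homeomorphism_maps_to unfolding homeos_def by blast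
  then have "(f ^^ m) (h x) = h x"
    using semiconjugacy_funpow[of X g h f x m] h(2) x by simp
  then show False
    using periods[of "h x" m] h(1) x by blast
qed

lemma continuous_on_if_clopen_in:
  assumes "clopen_in X A" "continuous_on A u" "continuous_on (X - A) f"
  shows "continuous_on X (\<lambda>x. if x \<in> A then u x else f x)"
proof -
  have X: "A \<union> (X - A) = X"
    using clopen_in_subset[OF assms(1)] by blast
  have "continuous_on (A \<union> (X - A)) (\<lambda>x. if x \<in> A then u x else f x)"
  proof (rule continuous_on_cases_local)
    show "closedin (top_of_set (A \<union> (X - A))) A" "closedin (top_of_set (A \<union> (X - A))) (X - A)"
      using assms(1) unfolding X clopen_in_def by auto
  qed (use assms in auto)
  then show ?thesis
    unfolding X .
qed

lemma homeomorphism_modify_on_clopen: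
  assumes f: "homeomorphism X X f f'" and A: "clopen_in X A" and B: "clopen_in X B"
    and fA: "f ` A = B" and u: "homeomorphism A B u u'"
  shows "homeomorphism X X (\<lambda>x. if x \<in> A then u x else f x) (\<lambda>y. if y \<in> B then u' y else f' y)"
proof
  have AX: "A \<subseteq> X" and BX: "B \<subseteq> X"
    using A B clopen_in_subset by blast+
  have f_out: "f x \<notin> B" if "x \<in> X" "x \<notin> A" for x
  proof
    assume "f x \<in> B"
    then obtain a where "a \<in> A" "f a = f x"
      unfolding fA[symmetric] by (metis imageE)
    then have "a = x"
      using homeomorphism_apply1[OF f] AX that(1) by (metis subsetD)
    then show False
      using that \<open>a \<in> A\<close> by blast
  qed
  have f'_out: "f' y \<notin> A" if "y \<in> X" "y \<notin> B" for y
  proof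
    assume "f' y \<in> A"
    then have "f (f' y) \<in> B"
      using fA by blast
    then show False
      using that homeomorphism_apply2[OF f] by simp
  qed
  show "continuous_on X (\<lambda>x. if x \<in> A then u x else f x)"
    using A homeomorphism_cont1[OF u] homeomorphism_cont1[OF f]
    by (intro continuous_on_if_clopen_in) (auto intro: continuous_on_subset)
  show "continuous_on X (\<lambda>y. if y \<in> B then u' y else f' y)"
    using B homeomorphism_cont2[OF u] homeomorphism_cont2[OF f]
    by (intro continuous_on_if_clopen_in) (auto intro: continuous_on_subset)
  show "(\<lambda>x. if x \<in> A then u x else f x) ` X \<subseteq> X" "(\<lambda>y. if y \<in> B then u' y else f' y) ` X \<subseteq> X"
    using homeomorphism_image1[OF u] homeomorphism_image2[OF u] AX BX
      homeomorphism_maps_to[OF f] homeomorphism_maps_to[OF homeomorphism_symD[OF f]] by auto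
  show "(if (if x \<in> A then u x else f x) \<in> B then u' (if x \<in> A then u x else f x)
      else f' (if x \<in> A then u x else f x)) = x" if "x \<in> X" for x
    using that f_out homeomorphism_apply1[OF u] homeomorphism_apply1[OF f] homeomorphism_image1[OF u]
    by auto
  show "(if (if y \<in> B then u' y else f' y) \<in> A then u (if y \<in> B then u' y else f' y)
      else f (if y \<in> B then u' y else f' y)) = y" if "y \<in> X" for y
    using that f'_out homeomorphism_apply2[OF u] homeomorphism_apply2[OF f] homeomorphism_image2[OF u]
    by auto
qed

lemma Dist_H_le_modification:
  assumes X: "X \<noteq> {}" and f: "homeomorphism X X f f'" and g: "homeomorphism X X g g'"
    and "bounded A" "bounded B"
    and "\<And>x. x \<in> X - A \<Longrightarrow> g x = f x" "\<And>x. x \<in> A \<Longrightarrow> f x \<in> B \<and> g x \<in> B"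
    and "\<And>y. y \<in> X - B \<Longrightarrow> g' y = f' y" "\<And>y. y \<in> B \<Longrightarrow> f' y \<in> A \<and> g' y \<in> A"
  shows "Dist_H X f g \<le> max (diameter A) (diameter B)"
proof -
  have "dist (f x) (g x) \<le> max (diameter A) (diameter B)" if "x \<in> X" for x
    using assms(4-7) that diameter_bounded_bound[of B "f x" "g x"] diameter_ge_0[of A]
    by (cases "x \<in> A") auto
  then have "dC0 X f g \<le> max (diameter A) (diameter B)"
    by (rule dC0_le[OF X])
  moreover have "dist (inv_into X f y) (inv_into X g y) \<le> max (diameter A) (diameter B)" if "y \<in> X" for y
    using assms(4,8,9) that diameter_bounded_bound[of A "f' y" "g' y"] diameter_ge_0[of A]
      inv_into_homeomorphism[OF f that] inv_into_homeomorphism[OF g that]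
    by (cases "y \<in> B") auto
  then have "dC0 X (inv_into X f) (inv_into X g) \<le> max (diameter A) (diameter B)"
    by (rule dC0_le[OF X])
  ultimately show ?thesis
    unfolding Dist_H_def by simp
qed

text \<open>The pieces \<open>Q0, f Q0, \<dots>, Qe\<close> are visited in turn; sending \<open>Qe\<close> back to \<open>Q0\<close> by the
  inverse of \<open>f ^^ (L - 1)\<close> instead of by \<open>f\<close> closes every orbit starting in \<open>Q0\<close> after \<open>L\<close> steps,
  and only moves points within \<open>Q0\<close> and \<open>Qe\<close>.\<close>
lemma periodic_perturbation:
  fixes f :: "'a::metric_space \<Rightarrow> 'a"
  assumes X: "X \<noteq> {}" and f: "homeomorphism X X f f'" and "L > 0"
    and Q0: "clopen_in X Q0" "Q0 \<noteq> {}" "bounded Q0" and Qe: "clopen_in X Qe" "bounded Qe"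
    and cycle: "(f ^^ (L - 1)) ` Q0 = Qe" "f ` Qe = Q0"
    and avoid: "\<And>x i. x \<in> Q0 \<Longrightarrow> i < L - 1 \<Longrightarrow> (f ^^ i) x \<notin> Qe"
  shows "\<exists>g\<in>homeos X. Dist_H X f g \<le> max (diameter Qe) (diameter Q0) \<and> (\<exists>x\<in>X. (g ^^ L) x = x)"
proof -
  define k where "k = L - 1"
  have Q0X: "Q0 \<subseteq> X" and QeX: "Qe \<subseteq> X"
    using Q0 Qe clopen_in_subset by blast+
  have "homeomorphism Q0 Qe (f ^^ k) (f' ^^ k)"
    using homeomorphism_funpow[OF f] Q0X QeX cycle(1) unfolding k_def by (rule homeomorphism_of_subsets)
  then have u: "homeomorphism Qe Q0 (f' ^^ k) (f ^^ k)"
    by (rule homeomorphism_symD)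
  define g where "g x = (if x \<in> Qe then (f' ^^ k) x else f x)" for x
  define g' where "g' y = (if y \<in> Q0 then (f ^^ k) y else f' y)" for y
  have hom: "homeomorphism X X g g'"
    unfolding g_def g'_def using homeomorphism_modify_on_clopen[OF f Qe(1) Q0(1) cycle(2) u] .
  then have "g \<in> homeos X"
    unfolding homeos_def by blast
  have "Dist_H X f g \<le> max (diameter Qe) (diameter Q0)"
  proof (rule Dist_H_le_modification[OF X f hom Qe(2) Q0(3)])
    show "f x \<in> Q0 \<and> g x \<in> Q0" if "x \<in> Qe" for x
      unfolding g_def using that cycle(2) homeomorphism_image1[OF u] by auto
    show "f' y \<in> Qe \<and> g' y \<in> Qe" if "y \<in> Q0" for y
      unfolding g'_def using that cycle(2) homeomorphism_apply1[OF f] QeX homeomorphism_image2[OF u] by auto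
  qed (simp_all add: g_def g'_def)
  obtain x0 where x0: "x0 \<in> Q0"
    using Q0(2) by blast
  have "(g ^^ i) x0 = (f ^^ i) x0" if "i \<le> k" for i
    using that
  proof (induction i)
    case (Suc i)
    then have "(f ^^ i) x0 \<notin> Qe"
      using avoid[OF x0] unfolding k_def by simp
    then show ?case
      using Suc unfolding g_def by simp
  qed simp
  then have "(g ^^ L) x0 = (f' ^^ k) ((f ^^ k) x0)"
    using \<open>L > 0\<close> x0 cycle(1) unfolding g_def k_def by (cases L) auto
  also have "\<dots> = x0"
    using homeomorphism_apply2[OF u] cycle(1) x0 unfolding k_def by auto
  finally show ?thesis
    using \<open>g \<in> homeos X\<close> \<open>Dist_H X f g \<le> max (diameter Qe) (diameter Q0)\<close> x0 Q0X by blast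
qed

section \<open>A tower of cyclically permuted partitions\<close>

definition two_cycles :: "nat \<Rightarrow> nat \<Rightarrow> nat" where
  "two_cycles B i = (if i < B then Suc i mod B else B + Suc (i - B) mod 3)"

lemma two_cycles_funpow:
  assumes "i < B + 3"
  shows "(two_cycles B ^^ m) i = (if i < B then (i + m) mod B else B + (i - B + m) mod 3)"
proof (induction m)
  case (Suc m)
  then show ?case
    using assms by (auto simp: two_cycles_def mod_Suc_eq)
qed (use assms in auto)

lemma add_mod_eq_self_iff: "a < N \<Longrightarrow> (a + m) mod N = a \<longleftrightarrow> N dvd m"
  for a m N :: nat
  using mod_eq_dvd_iff_nat[of a "a + m" N] by simp

lemma exact_periods_two_cycles: "exact_periods {..<B + 3} (two_cycles B) (\<lambda>i. if i < B then B else 3)"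
proof
  fix i m assume "i \<in> {..<B + 3}"
  then have i: "i < B + 3"
    by simp
  have "two_cycles B i < B + 3"
  proof (cases "i < B")
    case True
    then have "Suc i mod B < B"
      by simp
    moreover have "two_cycles B i = Suc i mod B"
      using True unfolding two_cycles_def by (rule if_P)
    ultimately show ?thesis
      by linarith
  qed (simp add: two_cycles_def)
  then show "two_cycles B i \<in> {..<B + 3}"
    by simp
  show "(if i < B then B else 3) > 0"
    by simp
  show "(two_cycles B ^^ m) i = i \<longleftrightarrow> (if i < B then B else 3) dvd m"
  proof (cases "i < B")
    case True
    then show ?thesis
      using two_cycles_funpow[OF i] add_mod_eq_self_iff[OF True] by simp
  next
    case False
    then have "(two_cycles B ^^ m) i = i \<longleftrightarrow> (i - B + m) mod 3 = i - B"
      using two_cycles_funpow[OF i] by auto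
    then show ?thesis
      using add_mod_eq_self_iff[of "i - B" 3 m] False i by simp
  qed
qed

lemma lcm_3_not_dvd: "\<not> 3 dvd (a::nat) \<Longrightarrow> lcm a 3 = 3 * a"
  using prime_imp_coprime[of "3::nat" a] by (simp add: lcm_coprime coprime_commute)

lemma not_3_dvd_lcm:
  fixes a b :: nat
  assumes "\<not> 3 dvd a" "\<not> 3 dvd b"
  shows "\<not> 3 dvd lcm a b"
  using assms dvd_trans[of 3 "lcm a b" "a * b"] by (auto simp: prime_dvd_mult_iff lcm_least)

lemma uniform_clopen_refinement:
  assumes "cantor_space X" "clopen_partition X K P e" "e' > 0"
  shows "\<exists>N::nat. \<forall>c\<ge>N. \<exists>C. \<forall>Q\<in>P. clopen_partition X Q (C Q ` {..<c}) e' \<and> inj_on (C Q) {..<c}"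
proof -
  have "\<forall>Q\<in>P. \<exists>N. \<forall>c\<ge>N. \<exists>R. clopen_partition X Q R e' \<and> card R = c"
    using clopen_partition_card[OF assms(1) _ _ assms(3)] assms(2) unfolding clopen_partition_def by blast
  then obtain N where N: "\<And>Q c. Q \<in> P \<Longrightarrow> N Q \<le> c \<Longrightarrow> \<exists>R. clopen_partition X Q R e' \<and> card R = c"
    by metis
  have "\<exists>C. \<forall>Q\<in>P. clopen_partition X Q (C Q ` {..<c}) e' \<and> inj_on (C Q) {..<c}"
    if c: "Max (N ` P) \<le> c" for c
  proof -
    have "\<exists>h. clopen_partition X Q (h ` {..<c}) e' \<and> inj_on h {..<c}" if Q: "Q \<in> P" for Q
    proof -
      have "N Q \<le> c"
        using c Q assms(2) unfolding clopen_partition_def by (meson Max_ge finite_imageI imageI le_trans)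
      then obtain R where R: "clopen_partition X Q R e'" "card R = c"
        using N[OF Q] by blast
      then obtain h where "bij_betw h {0..<c} R"
        using ex_bij_betw_nat_finite[of R] unfolding clopen_partition_def by metis
      then show ?thesis
        using R(1) unfolding bij_betw_def atLeast0LessThan by blast
    qed
    then show ?thesis
      by metis
  qed
  then show ?thesis
    by blast
qed

lemma enumerated_refinement:
  assumes P: "clopen_partition X K P e"
    and C: "\<And>Q. Q \<in> P \<Longrightarrow> clopen_partition X Q (C Q ` I) e' \<and> inj_on (C Q) I"
  shows "clopen_partition X K ((\<lambda>(Q, i). C Q i) ` (P \<times> I)) e'" "inj_on (\<lambda>(Q, i). C Q i) (P \<times> I)"
    and "\<And>Q i. Q \<in> P \<Longrightarrow> i \<in> I \<Longrightarrow> C Q i \<noteq> {} \<and> C Q i \<subseteq> Q"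
proof -
  show sub: "C Q i \<noteq> {} \<and> C Q i \<subseteq> Q" if "Q \<in> P" "i \<in> I" for Q i
    using C[OF that(1)] that(2) unfolding clopen_partition_def by blast
  have "(\<lambda>(Q, i). C Q i) ` (P \<times> I) = (\<Union>Q\<in>P. C Q ` I)"
    by auto
  then show "clopen_partition X K ((\<lambda>(Q, i). C Q i) ` (P \<times> I)) e'"
    using clopen_partition_UN[OF P] C by simp
  show "inj_on (\<lambda>(Q, i). C Q i) (P \<times> I)"
  proof (rule inj_onI, clarify)
    fix Q i Q' i' assume QQ': "Q \<in> P" "i \<in> I" "Q' \<in> P" "i' \<in> I" "C Q i = C Q' i'"
    then obtain x where "x \<in> Q" "x \<in> Q'"
      using sub by (metis ex_in_conv subsetD)
    then have "Q = Q'"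
      using clopen_partition_unique[OF P QQ'(1,3)] by blast
    then show "Q = Q' \<and> i = i'"
      using C[OF QQ'(1)] QQ' by (auto dest: inj_onD)
  qed
qed

definition tower_level :: "'a::metric_space set \<Rightarrow> nat \<Rightarrow> 'a set set \<Rightarrow> ('a set \<Rightarrow> 'a set) \<Rightarrow> ('a set \<Rightarrow> nat) \<Rightarrow> bool" where
  "tower_level X n P \<sigma> per \<longleftrightarrow> clopen_partition X X P (1 / Suc n) \<and> exact_periods P \<sigma> per
     \<and> (\<forall>Q\<in>P. \<not> 3 dvd per Q \<longrightarrow> Suc n \<le> per Q) \<and> (\<exists>Q\<in>P. \<not> 3 dvd per Q)"

definition tower_refines :: "'a set set \<Rightarrow> ('a set \<Rightarrow> 'a set) \<Rightarrow> ('a set \<Rightarrow> nat) \<Rightarrow>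
    'a set set \<Rightarrow> ('a set \<Rightarrow> 'a set) \<Rightarrow> ('a set \<Rightarrow> nat) \<Rightarrow> bool" where
  "tower_refines P \<sigma> per P' \<sigma>' per' \<longleftrightarrow> (\<forall>Q'\<in>P'. \<exists>Q\<in>P. Q' \<subseteq> Q)
     \<and> (\<forall>Q'\<in>P'. \<forall>Q\<in>P. Q' \<subseteq> Q \<longrightarrow> \<sigma>' Q' \<subseteq> \<sigma> Q \<and> (3 dvd per Q \<longrightarrow> per' Q' = per Q))
     \<and> (\<forall>Q\<in>P. \<not> 3 dvd per Q \<longrightarrow> (\<exists>Q'\<in>P'. Q' \<subseteq> Q \<and> per' Q' = 3 * per Q))"

lemma tower_level_0:
  assumes "cantor_space X"
  shows "\<exists>P \<sigma> per. tower_level X 0 P \<sigma> per"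
proof -
  have X: "compact X" "totally_disconnected_set X" "X \<noteq> {}"
    using assms unfolding cantor_space_def by auto
  then obtain P where P: "clopen_partition X X P 1"
    using clopen_partition_exists[OF X(1,2) clopen_in_self, of 1] by auto
  then have "P \<noteq> {}"
    using X(3) unfolding clopen_partition_def by auto
  then have "tower_level X 0 P id (\<lambda>_. 1)"
    unfolding tower_level_def using P exact_periods_id by auto
  then show ?thesis
    by blast
qed

lemma tower_level_Suc:
  assumes level: "tower_level X n P \<sigma> per"
    and P': "clopen_partition X X P' (1 / Suc (Suc n))" "exact_periods P' \<sigma>' per'"
    and B: "n + 2 \<le> B" "\<not> 3 dvd B"
    and pieces: "P' = (\<lambda>(Q, i). C Q i) ` (P \<times> {..<B + 3})"
    and period: "\<And>Q i. Q \<in> P \<Longrightarrow> i < B + 3 \<Longrightarrow>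
      per' (C Q i) = lcm (per Q) (if 3 dvd per Q then 1 else if i < B then B else 3)"
  shows "tower_level X (Suc n) P' \<sigma>' per'"
proof -
  have per_pos: "\<And>Q. Q \<in> P \<Longrightarrow> per Q > 0" and "\<exists>Q\<in>P. \<not> 3 dvd per Q"
    using level exact_periods.period_pos unfolding tower_level_def by auto
  then obtain Q0 where Q0: "Q0 \<in> P" "\<not> 3 dvd per Q0"
    by blast
  have "Suc (Suc n) \<le> per' Q'" if Q': "Q' \<in> P'" "\<not> 3 dvd per' Q'" for Q'
  proof -
    obtain Q i where Qi: "Q \<in> P" "i < B + 3" "Q' = C Q i"
      using Q'(1) unfolding pieces by auto
    then have "per' Q' = lcm (per Q) B"
      using Q'(2) period[OF Qi(1,2)] by (auto split: if_splits)
    moreover have "B \<le> lcm (per Q) B"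
      using per_pos[OF Qi(1)] B(1) by (intro dvd_imp_le) (auto simp: lcm_pos_nat)
    ultimately show ?thesis
      using B(1) by simp
  qed
  moreover have "\<not> 3 dvd per' (C Q0 0)" "C Q0 0 \<in> P'"
    using period[OF Q0(1)] not_3_dvd_lcm[OF Q0(2) B(2)] Q0 B(1) unfolding pieces by force+
  ultimately show ?thesis
    unfolding tower_level_def using P' by auto
qed

lemma tower_refines_enumeration:
  assumes P: "clopen_partition X X P e"
    and pieces: "P' = (\<lambda>(Q, i). C Q i) ` (P \<times> {..<B + 3})"
    and sub: "\<And>Q i. Q \<in> P \<Longrightarrow> i < B + 3 \<Longrightarrow> C Q i \<noteq> {} \<and> C Q i \<subseteq> Q"
    and image: "\<And>Q i. Q \<in> P \<Longrightarrow> i < B + 3 \<Longrightarrow> \<sigma>' (C Q i) \<subseteq> \<sigma> Q"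
    and period: "\<And>Q i. Q \<in> P \<Longrightarrow> i < B + 3 \<Longrightarrow>
      per' (C Q i) = lcm (per Q) (if 3 dvd per Q then 1 else if i < B then B else 3)"
  shows "tower_refines P \<sigma> per P' \<sigma>' per'"
  unfolding tower_refines_def
proof (intro conjI ballI impI)
  have P'_cases: "\<exists>Q\<in>P. \<exists>i<B + 3. Q' = C Q i" if "Q' \<in> P'" for Q'
    using that unfolding pieces by auto
  fix Q' assume "Q' \<in> P'"
  then show "\<exists>Q\<in>P. Q' \<subseteq> Q"
    using P'_cases sub by blast
  fix Q assume "Q \<in> P" "Q' \<subseteq> Q"
  obtain Q1 i where Q1: "Q1 \<in> P" "i < B + 3" "Q' = C Q1 i"
    using P'_cases[OF \<open>Q' \<in> P'\<close>] by blast
  then have "Q1 = Q"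
    using sub[OF Q1(1,2)] clopen_partition_unique[OF P Q1(1) \<open>Q \<in> P\<close>] \<open>Q' \<subseteq> Q\<close> by blast
  then show "\<sigma>' Q' \<subseteq> \<sigma> Q" "3 dvd per Q \<Longrightarrow> per' Q' = per Q"
    using image period Q1 by simp_all
next
  fix Q assume Q: "Q \<in> P" "\<not> 3 dvd per Q"
  then have "per' (C Q B) = 3 * per Q" "C Q B \<in> P'" "C Q B \<subseteq> Q"
    using period[of Q B] lcm_3_not_dvd sub[of Q B] unfolding pieces by force+
  then show "\<exists>Q'\<in>P'. Q' \<subseteq> Q \<and> per' Q' = 3 * per Q"
    by blast
qed

text \<open>Each piece of period \<open>l\<close> is cut into \<open>B + 3\<close> pieces. If 3 divides \<open>l\<close> they are all
  moved along with the old piece; otherwise they are permuted by a \<open>B\<close>-cycle and a 3-cycle,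
  producing periods \<open>lcm l B\<close> (still prime to 3, and large) and \<open>3 l\<close>.\<close>
lemma tower_level_refinement:
  assumes X: "cantor_space X" and level: "tower_level X n P \<sigma> per"
  shows "\<exists>P' \<sigma>' per'. tower_level X (Suc n) P' \<sigma>' per' \<and> tower_refines P \<sigma> per P' \<sigma>' per'"
proof -
  have P: "clopen_partition X X P (1 / Suc n)" and \<sigma>: "exact_periods P \<sigma> per"
    using level unfolding tower_level_def by auto
  obtain N where N: "\<And>c. (N::nat) \<le> c \<Longrightarrow> \<exists>C. \<forall>Q\<in>P. clopen_partition X Q (C Q ` {..<c}) (1 / Suc (Suc n))
      \<and> inj_on (C Q) {..<c}"
    using uniform_clopen_refinement[OF X P, of "1 / Suc (Suc n)"] by auto
  define c where "c = (if 3 dvd max N (n + 5) then Suc (max N (n + 5)) else max N (n + 5))"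
  define B where "B = c - 3"
  have c: "N \<le> B + 3" "c = B + 3" "n + 2 \<le> B" "\<not> 3 dvd B"
    unfolding B_def c_def by presburger+
  obtain C where C: "\<And>Q. Q \<in> P \<Longrightarrow> clopen_partition X Q (C Q ` {..<B + 3}) (1 / Suc (Suc n))
      \<and> inj_on (C Q) {..<B + 3}"
    using N[OF c(1)] by blast
  define t where "t Q = (if 3 dvd per Q then id else two_cycles B)" for Q
  define k where "k Q = (if 3 dvd per Q then (\<lambda>_. 1) else (\<lambda>i. if i < B then B else 3))" for Q
  have t: "exact_periods {..<B + 3} (t Q) (k Q)" for Q
  proof (cases "3 dvd per Q")
    case True
    show ?thesis
      unfolding t_def k_def if_P[OF True] by (rule exact_periods_id)
  next
    case False
    show ?thesis
      unfolding t_def k_def if_not_P[OF False] by (rule exact_periods_two_cycles)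
  qed
  have t_step: "t (\<sigma> Q) = t Q" if "Q \<in> P" for Q
    unfolding t_def using exact_periods.period_step[OF \<sigma> that] by simp
  have P': "clopen_partition X X ((\<lambda>(Q, i). C Q i) ` (P \<times> {..<B + 3})) (1 / Suc (Suc n))"
    and inj: "inj_on (\<lambda>(Q, i). C Q i) (P \<times> {..<B + 3})"
    and sub: "\<And>Q i. Q \<in> P \<Longrightarrow> i < B + 3 \<Longrightarrow> C Q i \<noteq> {} \<and> C Q i \<subseteq> Q"
    using enumerated_refinement[OF P C] by auto
  obtain \<sigma>' per' where \<sigma>': "exact_periods ((\<lambda>(Q, i). C Q i) ` (P \<times> {..<B + 3})) \<sigma>' per'"
    and \<sigma>'_C: "\<And>Q i. Q \<in> P \<Longrightarrow> i \<in> {..<B + 3} \<Longrightarrow> \<sigma>' (C Q i) = C (\<sigma> Q) (t Q i)"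
    and per'_C: "\<And>Q i. Q \<in> P \<Longrightarrow> i \<in> {..<B + 3} \<Longrightarrow> per' (C Q i) = lcm (per Q) (k Q i)"
    using exact_periods_enumerated_refinement[of P \<sigma> per C "{..<B + 3}" t k, OF \<sigma> inj t_step t]
    by blast
  have image: "\<sigma>' (C Q i) \<subseteq> \<sigma> Q" if "Q \<in> P" "i < B + 3" for Q i
    using \<sigma>'_C[of Q i] sub exact_periods.maps_to[OF \<sigma> that(1)]
      exact_periods.maps_to[OF t, of i Q] that by simp
  have period: "per' (C Q i) = lcm (per Q) (if 3 dvd per Q then 1 else if i < B then B else 3)"
    if "Q \<in> P" "i < B + 3" for Q i
    using per'_C[of Q i] that unfolding k_def by simp
  show ?thesis
    using tower_level_Suc[of X n P \<sigma> per _ \<sigma>' per' B C, OF level P' \<sigma>' c(3,4) refl period]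
      tower_refines_enumeration[of X P _ _ C B \<sigma>' \<sigma> per' per, OF P refl sub image period] by blast
qed

section \<open>The limit homeomorphism\<close>

lemma ex_one_div_Suc_less: "(e::real) > 0 \<Longrightarrow> \<exists>n. 1 / real (Suc n) < e"
  using reals_Archimedean[of e] by (simp add: inverse_eq_divide)

locale cantor_tower =
  fixes X :: "'a::metric_space set" and P :: "nat \<Rightarrow> 'a set set"
    and \<sigma> :: "nat \<Rightarrow> 'a set \<Rightarrow> 'a set" and per :: "nat \<Rightarrow> 'a set \<Rightarrow> nat"
  assumes cantor: "cantor_space X"
    and level: "tower_level X n (P n) (\<sigma> n) (per n)"
    and refines: "tower_refines (P n) (\<sigma> n) (per n) (P (Suc n)) (\<sigma> (Suc n)) (per (Suc n))"
begin

lemma compact: "compact X" and nonempty: "X \<noteq> {}"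
  using cantor by (auto simp: cantor_space_def)

lemma partition: "clopen_partition X X (P n) (1 / Suc n)"
  using level[of n] unfolding tower_level_def by blast

lemma periods: "exact_periods (P n) (\<sigma> n) (per n)"
  using level[of n] unfolding tower_level_def by blast

lemma long_period: "Q \<in> P n \<Longrightarrow> \<not> 3 dvd per n Q \<Longrightarrow> Suc n \<le> per n Q"
  using level[of n] unfolding tower_level_def by blast

lemma some_period_not_3: "\<exists>Q\<in>P n. \<not> 3 dvd per n Q"
  using level[of n] unfolding tower_level_def by blast

lemma refines_piece: "Q' \<in> P (Suc n) \<Longrightarrow> \<exists>Q\<in>P n. Q' \<subseteq> Q"
  using refines[of n] unfolding tower_refines_def by blast

lemma refines_image: "Q' \<in> P (Suc n) \<Longrightarrow> Q \<in> P n \<Longrightarrow> Q' \<subseteq> Q \<Longrightarrow> \<sigma> (Suc n) Q' \<subseteq> \<sigma> n Q"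
  using refines[of n] unfolding tower_refines_def by blast

lemma refines_period_3:
  "Q' \<in> P (Suc n) \<Longrightarrow> Q \<in> P n \<Longrightarrow> Q' \<subseteq> Q \<Longrightarrow> 3 dvd per n Q \<Longrightarrow> per (Suc n) Q' = per n Q"
  using refines[of n] unfolding tower_refines_def by blast

lemma refines_period_not_3:
  "Q \<in> P n \<Longrightarrow> \<not> 3 dvd per n Q \<Longrightarrow> \<exists>Q'\<in>P (Suc n). Q' \<subseteq> Q \<and> per (Suc n) Q' = 3 * per n Q"
  using refines[of n] unfolding tower_refines_def by blast

lemma piece_subset: "Q \<in> P n \<Longrightarrow> Q \<subseteq> X"
  using partition[of n] unfolding clopen_partition_def by blast

lemma piece_nonempty: "Q \<in> P n \<Longrightarrow> Q \<noteq> {}"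
  using partition[of n] unfolding clopen_partition_def by blast

lemma clopen_piece: "Q \<in> P n \<Longrightarrow> clopen_in X Q"
  using partition[of n] unfolding clopen_partition_def by blast

lemma perm_in_level: "Q \<in> P n \<Longrightarrow> \<sigma> n Q \<in> P n"
  using exact_periods.maps_to[OF periods] .

lemma inj_on_perm: "inj_on (\<sigma> n) (P n)"
  using exact_periods.inj[OF periods] .

lemma perm_image_level: "\<sigma> n ` P n = P n"
  using partition[of n] unfolding clopen_partition_def
  by (intro endo_inj_surj inj_on_perm) (auto simp: perm_in_level)

lemma perm_funpow_in: "Q \<in> P n \<Longrightarrow> (\<sigma> n ^^ i) Q \<in> P n"
  using exact_periods.funpow_in[OF periods] .

lemma piece_unique: "Q \<in> P n \<Longrightarrow> R \<in> P n \<Longrightarrow> x \<in> Q \<Longrightarrow> x \<in> R \<Longrightarrow> Q = R"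
  using clopen_partition_unique[OF partition] by blast

lemma dist_less: "Q \<in> P n \<Longrightarrow> a \<in> Q \<Longrightarrow> b \<in> Q \<Longrightarrow> dist a b < 1 / Suc n"
  using clopen_partition_dist_less[OF partition] by blast

abbreviation piece :: "nat \<Rightarrow> 'a \<Rightarrow> 'a set" where
  "piece n \<equiv> piece_of (P n)"

lemma piece: "x \<in> X \<Longrightarrow> piece n x \<in> P n" "x \<in> X \<Longrightarrow> x \<in> piece n x"
  using piece_of[OF partition] by auto

lemma piece_eq: "Q \<in> P n \<Longrightarrow> x \<in> Q \<Longrightarrow> piece n x = Q"
  using piece_of_eq[OF partition] .

lemma perm_piece_Suc_subset: "x \<in> X \<Longrightarrow> \<sigma> (Suc n) (piece (Suc n) x) \<subseteq> \<sigma> n (piece n x)"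
proof -
  assume x: "x \<in> X"
  obtain Q where Q: "Q \<in> P n" "piece (Suc n) x \<subseteq> Q"
    using refines_piece piece[OF x] by blast
  then have "Q = piece n x"
    using piece_eq piece(2)[OF x] by blast
  then show ?thesis
    using refines_image piece[OF x] Q by blast
qed

definition tower_map :: "'a \<Rightarrow> 'a" where
  "tower_map x = (SOME y. y \<in> X \<and> (\<forall>n. y \<in> \<sigma> n (piece n x)))"

text \<open>The images \<open>\<sigma> n (piece n x)\<close> are nested nonempty compact sets.\<close>
lemma tower_map: "x \<in> X \<Longrightarrow> tower_map x \<in> X \<and> (\<forall>n. tower_map x \<in> \<sigma> n (piece n x))"
proof -
  assume x: "x \<in> X"
  have image: "\<sigma> n (piece n x) \<in> P n" for n
    using perm_in_level piece[OF x] by blast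
  have "X \<inter> (\<Inter>n. \<sigma> n (piece n x)) \<noteq> {}"
  proof (rule compact_imp_fip_image[OF compact])
    show "closed (\<sigma> n (piece n x))" for n
      using compact_imp_closed compact_clopen_in[OF compact clopen_piece[OF image]] by blast
    fix I :: "nat set" assume "finite I"
    have "\<sigma> (Max (insert 0 I)) (piece (Max (insert 0 I)) x) \<subseteq> \<sigma> i (piece i x)" if "i \<in> I" for i
      using lift_Suc_antimono_le[of "\<lambda>n. \<sigma> n (piece n x)", OF perm_piece_Suc_subset[OF x]] that \<open>finite I\<close>
      by simp
    moreover have "\<sigma> m (piece m x) \<noteq> {}" "\<sigma> m (piece m x) \<subseteq> X" for m
      using piece_nonempty piece_subset image by blast+
    ultimately show "X \<inter> (\<Inter>i\<in>I. \<sigma> i (piece i x)) \<noteq> {}"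
      by blast
  qed
  then have "\<exists>y. y \<in> X \<and> (\<forall>n. y \<in> \<sigma> n (piece n x))"
    by blast
  then show ?thesis
    unfolding tower_map_def by (rule someI_ex)
qed

lemma tower_map_in: "Q \<in> P n \<Longrightarrow> x \<in> Q \<Longrightarrow> tower_map x \<in> \<sigma> n Q"
  using tower_map piece_eq piece_subset by blast

lemma continuous_on_tower_map: "continuous_on X tower_map"
  unfolding continuous_on_iff
proof (intro ballI allI impI)
  fix x and e :: real assume x: "x \<in> X" and "e > 0"
  then obtain n where n: "1 / real (Suc n) < e"
    using ex_one_div_Suc_less by blast
  obtain T where T: "open T" "piece n x = X \<inter> T"
    using clopen_piece[OF piece(1)[OF x]] unfolding clopen_in_def openin_open by blast
  then obtain d where d: "d > 0" "ball x d \<subseteq> T"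
    using piece(2)[OF x] open_contains_ball by blast
  have "dist (tower_map y) (tower_map x) < e" if "y \<in> X" "dist y x < d" for y
  proof -
    have "y \<in> piece n x"
      using that d T by (auto simp: dist_commute)
    then have "tower_map y \<in> \<sigma> n (piece n x)" "tower_map x \<in> \<sigma> n (piece n x)"
      using tower_map_in piece[OF x] by blast+
    then show ?thesis
      using dist_less[OF perm_in_level[OF piece(1)[OF x]]] n by fastforce
  qed
  then show "\<exists>d>0. \<forall>y\<in>X. dist y x < d \<longrightarrow> dist (tower_map y) (tower_map x) < e"
    using d(1) by blast
qed

lemma inj_on_tower_map: "inj_on tower_map X"
proof (rule inj_onI, rule ccontr)
  fix x y assume x: "x \<in> X" and y: "y \<in> X" and eq: "tower_map x = tower_map y" and "x \<noteq> y"
  obtain n where n: "1 / real (Suc n) < dist x y"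
    using ex_one_div_Suc_less[of "dist x y"] \<open>x \<noteq> y\<close> by auto
  have "piece n x \<noteq> piece n y"
  proof
    assume "piece n x = piece n y"
    then have "dist x y < 1 / Suc n"
      using dist_less[OF piece(1)[OF x] piece(2)[OF x]] piece(2)[OF y] by simp
    then show False
      using n by simp
  qed
  then have "\<sigma> n (piece n x) \<noteq> \<sigma> n (piece n y)"
    using inj_on_perm[of n] piece[OF x] piece[OF y] unfolding inj_on_def by blast
  moreover have "tower_map x \<in> \<sigma> n (piece n x)" "tower_map x \<in> \<sigma> n (piece n y)"
    using tower_map_in piece[OF x] piece[OF y] eq by metis+
  ultimately show False
    using piece_unique perm_in_level piece[OF x] piece[OF y] by blast
qed

lemma tower_map_surj: "tower_map ` X = X"
proof
  show "tower_map ` X \<subseteq> X"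
    using tower_map by blast
  have "closed (tower_map ` X)"
    using compact_continuous_image[OF continuous_on_tower_map compact] compact_imp_closed by blast
  moreover have "y \<in> closure (tower_map ` X)" if y: "y \<in> X" for y
    unfolding closure_approachable
  proof (intro allI impI)
    fix e :: real assume "e > 0"
    then obtain n where n: "1 / real (Suc n) < e"
      using ex_one_div_Suc_less by blast
    obtain R where R: "R \<in> P n" "\<sigma> n R = piece n y"
      using piece[OF y] perm_image_level[of n] by (metis imageE)
    obtain x where x: "x \<in> R"
      using piece_nonempty[OF R(1)] by blast
    have "dist (tower_map x) y < e"
      using tower_map_in[OF R(1) x] R(2) dist_less piece[OF y] n by fastforce
    moreover have "tower_map x \<in> tower_map ` X"
      using x piece_subset R(1) by blast
    ultimately show "\<exists>z\<in>tower_map ` X. dist z y < e"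
      by blast
  qed
  ultimately show "X \<subseteq> tower_map ` X"
    by auto
qed

lemma tower_map_homeos: "tower_map \<in> homeos X"
  using homeomorphism_compact[OF compact continuous_on_tower_map tower_map_surj inj_on_tower_map]
  unfolding homeos_def by blast

lemma tower_map_image: "Q \<in> P n \<Longrightarrow> tower_map ` Q = \<sigma> n Q"
proof
  assume Q: "Q \<in> P n"
  show "tower_map ` Q \<subseteq> \<sigma> n Q"
    using tower_map_in Q by blast
  show "\<sigma> n Q \<subseteq> tower_map ` Q"
  proof
    fix y assume y: "y \<in> \<sigma> n Q"
    then obtain x where x: "x \<in> X" "y = tower_map x"
      using tower_map_surj piece_subset[OF perm_in_level[OF Q]] by blast
    then have "\<sigma> n (piece n x) = \<sigma> n Q"
      using tower_map_in[OF piece[OF x(1)]] piece_unique[OF perm_in_level perm_in_level] piece(1)[OF x(1)] Q y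
      by blast
    then have "piece n x = Q"
      using inj_on_perm[of n] piece[OF x(1)] Q unfolding inj_on_def by blast
    then show "y \<in> tower_map ` Q"
      using piece[OF x(1)] x(2) by blast
  qed
qed

lemma funpow_tower_map_in: "Q \<in> P n \<Longrightarrow> x \<in> Q \<Longrightarrow> (tower_map ^^ i) x \<in> (\<sigma> n ^^ i) Q"
  by (induction i) (auto simp: tower_map_in perm_funpow_in)

lemma funpow_tower_map_image: "Q \<in> P n \<Longrightarrow> (tower_map ^^ i) ` Q = (\<sigma> n ^^ i) Q"
proof (induction i)
  case (Suc i)
  have "(tower_map ^^ Suc i) ` Q = tower_map ` ((tower_map ^^ i) ` Q)"
    by (simp add: image_comp)
  also have "\<dots> = \<sigma> n ((\<sigma> n ^^ i) Q)"
    using Suc tower_map_image[OF perm_funpow_in[OF Suc.prems]] by simp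
  finally show ?case
    by simp
qed simp

text \<open>Periods divisible by 3 persist through all later levels, where the pieces shrink to points.\<close>
lemma funpow_period_3:
  assumes Q: "Q \<in> P n" "x \<in> Q" "3 dvd per n Q"
  shows "(tower_map ^^ per n Q) x = x"
proof (rule ccontr)
  have x: "x \<in> X"
    using Q piece_subset by blast
  have period: "per (n + k) (piece (n + k) x) = per n Q" for k
  proof (induction k)
    case 0
    then show ?case
      using piece_eq Q by simp
  next
    case (Suc k)
    obtain R where "R \<in> P (n + k)" "piece (Suc (n + k)) x \<subseteq> R"
      using refines_piece piece[OF x] by blast
    then have "piece (Suc (n + k)) x \<subseteq> piece (n + k) x"
      using piece_eq piece(2)[OF x] by blast
    then have "per (Suc (n + k)) (piece (Suc (n + k)) x) = per (n + k) (piece (n + k) x)"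
      using refines_period_3[OF piece(1)[OF x] piece(1)[OF x]] Suc Q(3) by simp
    then show ?case
      using Suc by simp
  qed
  have close: "(tower_map ^^ per n Q) x \<in> piece (n + k) x" for k
    using funpow_tower_map_in[OF piece[OF x]] exact_periods.funpow_period[OF periods piece(1)[OF x]]
      period[of k] by metis
  assume "(tower_map ^^ per n Q) x \<noteq> x"
  then obtain N where N: "1 / real (Suc N) < dist ((tower_map ^^ per n Q) x) x"
    using ex_one_div_Suc_less[of "dist ((tower_map ^^ per n Q) x) x"] by auto
  have "dist ((tower_map ^^ per n Q) x) x < 1 / real (Suc (n + N))"
    using dist_less close[of N] piece[OF x] by blast
  also have "\<dots> \<le> 1 / real (Suc N)"
    by (intro divide_left_mono) auto
  finally show False
    using N by simp
qed

lemma tower_map_periods_3: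
  assumes "x \<in> X" "m > 0" "(tower_map ^^ m) x = x"
  shows "3 dvd m"
proof -
  let ?Q = "piece m x"
  have Q: "?Q \<in> P m" "x \<in> ?Q"
    using piece[OF assms(1)] by auto
  have "x \<in> (\<sigma> m ^^ m) ?Q"
    using funpow_tower_map_in[OF Q, of m] assms(3) by simp
  then have "(\<sigma> m ^^ m) ?Q = ?Q"
    using piece_unique[OF perm_funpow_in[OF Q(1)] Q(1) _ Q(2)] by blast
  then have dvd: "per m ?Q dvd m"
    using exact_periods.funpow_eq_self_iff[OF periods Q(1)] by simp
  show ?thesis
  proof (rule ccontr)
    assume "\<not> 3 dvd m"
    then have "\<not> 3 dvd per m ?Q"
      using dvd dvd_trans by blast
    then have "Suc m \<le> per m ?Q"
      using long_period[OF Q(1)] by blast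
    moreover have "per m ?Q \<le> m"
      using dvd_imp_le[OF dvd assms(2)] .
    ultimately show False
      by simp
  qed
qed

lemma topologically_stable_tower_map_3: "topologically_stable X (tower_map ^^ 3)"
proof (rule topologically_stable_if_periodic_partitions[OF compact nonempty homeos_funpow[OF tower_map_homeos]])
  fix \<epsilon> :: real assume "\<epsilon> > 0"
  then obtain n where n: "1 / real (Suc n) < \<epsilon>"
    using ex_one_div_Suc_less by blast
  define per3 where "per3 Q = per n Q div gcd (per n Q) 3" for Q
  have "exact_periods (P n) (\<sigma> n ^^ 3) per3"
    unfolding per3_def by (rule exact_periods_funpow[OF periods])
  moreover have "clopen_partition X X (P n) \<epsilon>"
    using clopen_partition_mono[OF partition] n by simp
  moreover have "\<forall>Q\<in>P n. \<forall>x\<in>Q. (tower_map ^^ 3) x \<in> (\<sigma> n ^^ 3) Q"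
    using funpow_tower_map_in by blast
  moreover have "\<exists>q\<in>Q. ((tower_map ^^ 3) ^^ per3 Q) q = q" if Q: "Q \<in> P n" for Q
  proof (cases "3 dvd per n Q")
    case True
    then have "3 * per3 Q = per n Q"
      unfolding per3_def by (simp add: gcd_nat.absorb2)
    moreover obtain q where "q \<in> Q"
      using piece_nonempty[OF Q] by blast
    ultimately show ?thesis
      using funpow_period_3[OF Q _ True] by (metis funpow_mult)
  next
    case False
    then have "per3 Q = per n Q"
      unfolding per3_def using prime_imp_coprime[of "3::nat" "per n Q"]
      by (simp add: coprime_commute coprime_iff_gcd_eq_1 gcd.commute)
    obtain Q' where Q': "Q' \<in> P (Suc n)" "Q' \<subseteq> Q" "per (Suc n) Q' = 3 * per n Q"
      using refines_period_not_3[OF Q False] by blast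
    moreover obtain q where "q \<in> Q'"
      using piece_nonempty[OF Q'(1)] by blast
    ultimately show ?thesis
      using funpow_period_3[OF Q'(1) \<open>q \<in> Q'\<close>] \<open>per3 Q = per n Q\<close> by (metis dvd_triv_left funpow_mult subsetD)
  qed
  ultimately show "\<exists>P \<pi> per. clopen_partition X X P \<epsilon> \<and> exact_periods P \<pi> per
      \<and> (\<forall>Q\<in>P. \<forall>x\<in>Q. (tower_map ^^ 3) x \<in> \<pi> Q) \<and> (\<forall>Q\<in>P. \<exists>q\<in>Q. ((tower_map ^^ 3) ^^ per Q) q = q)"
    by blast
qed

lemma tower_map_cycle:
  assumes Q: "Q \<in> P n"
  defines "Qe \<equiv> (\<sigma> n ^^ (per n Q - 1)) Q"
  shows "(tower_map ^^ (per n Q - 1)) ` Q = Qe" "tower_map ` Qe = Q"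
    and "\<And>x i. x \<in> Q \<Longrightarrow> i < per n Q - 1 \<Longrightarrow> (tower_map ^^ i) x \<notin> Qe"
proof -
  have L: "per n Q > 0"
    using exact_periods.period_pos[OF periods Q] .
  have Qe: "Qe \<in> P n"
    unfolding Qe_def using perm_funpow_in[OF Q] .
  show "(tower_map ^^ (per n Q - 1)) ` Q = Qe"
    unfolding Qe_def using funpow_tower_map_image[OF Q] .
  have "\<sigma> n Qe = (\<sigma> n ^^ Suc (per n Q - 1)) Q"
    unfolding Qe_def by simp
  also have "\<dots> = Q"
    using L exact_periods.funpow_period[OF periods Q] by simp
  finally show "tower_map ` Qe = Q"
    using tower_map_image[OF Qe] by simp
  show "(tower_map ^^ i) x \<notin> Qe" if "x \<in> Q" "i < per n Q - 1" for x i
  proof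
    assume "(tower_map ^^ i) x \<in> Qe"
    then have "(\<sigma> n ^^ i) Q = Qe"
      using funpow_tower_map_in[OF Q that(1)] piece_unique perm_funpow_in[OF Q] Qe by blast
    then have "i mod per n Q = (per n Q - 1) mod per n Q"
      using exact_periods.funpow_eq_iff_mod[OF periods Q] unfolding Qe_def by blast
    then show False
      using that(2) L by simp
  qed
qed

lemma not_topologically_stable_tower_map: "\<not> topologically_stable X tower_map"
proof (rule not_topologically_stable_if_new_periods)
  show "3 dvd m" if "x \<in> X" "0 < m" "(tower_map ^^ m) x = x" for x m
    using tower_map_periods_3 that by blast
  fix \<delta> :: real assume "\<delta> > 0"
  then obtain n where n: "1 / real (Suc n) < \<delta>"
    using ex_one_div_Suc_less by blast
  obtain Q where Q: "Q \<in> P n" "\<not> 3 dvd per n Q"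
    using some_period_not_3 by blast
  let ?Qe = "(\<sigma> n ^^ (per n Q - 1)) Q"
  have pieces: "clopen_in X R \<and> R \<noteq> {} \<and> bounded R \<and> diameter R < \<delta>" if "R \<in> P n" for R
    using partition[of n] that n unfolding clopen_partition_def by force
  obtain f' where f': "homeomorphism X X tower_map f'"
    using tower_map_homeos unfolding homeos_def by blast
  obtain g where g: "g \<in> homeos X" "Dist_H X tower_map g \<le> max (diameter ?Qe) (diameter Q)"
    "\<exists>x\<in>X. (g ^^ per n Q) x = x"
    using periodic_perturbation[OF nonempty f' exact_periods.period_pos[OF periods Q(1)] _ _ _ _ _
        tower_map_cycle[OF Q(1)]] pieces[OF Q(1)] pieces[OF perm_funpow_in[OF Q(1)]] by blast
  moreover have "max (diameter ?Qe) (diameter Q) < \<delta>"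
    using pieces[OF Q(1)] pieces[OF perm_funpow_in[OF Q(1)]] by simp
  ultimately have "Dist_H X tower_map g < \<delta>"
    by linarith
  then show "\<exists>g\<in>homeos X. Dist_H X tower_map g < \<delta> \<and> (\<exists>x\<in>X. \<exists>m>0. \<not> 3 dvd m \<and> (g ^^ m) x = x)"
    using g(1,3) exact_periods.period_pos[OF periods Q(1)] Q(2) by blast
qed

end

theorem corollary1p3:
  fixes X :: "'a::metric_space set"
  assumes "cantor_space X"
  shows "\<exists>f\<in>homeos X. topologically_stable X (f ^^ 3) \<and> \<not> topologically_stable X f"
proof -
  let ?level = "\<lambda>n (P, \<sigma>, per). tower_level X n P \<sigma> per"
  let ?refines = "\<lambda>n (P, \<sigma>, per) (P', \<sigma>', per'). tower_refines P \<sigma> per P' \<sigma>' per'"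
  have "\<exists>T. \<forall>n. ?level n (T n) \<and> ?refines n (T n) (T (Suc n))"
  proof (rule dependent_nat_choice)
    show "\<exists>T. ?level 0 T"
      using tower_level_0[OF assms] by auto
    show "\<exists>T'. ?level (Suc n) T' \<and> ?refines n T T'" if "?level n T" for T n
      using tower_level_refinement[OF assms] that by (cases T) auto
  qed
  then obtain T where T: "\<And>n. ?level n (T n) \<and> ?refines n (T n) (T (Suc n))"
    by blast
  interpret cantor_tower X "\<lambda>n. fst (T n)" "\<lambda>n. fst (snd (T n))" "\<lambda>n. snd (snd (T n))"
    using assms T by unfold_locales (auto simp: split_beta)
  show ?thesis
    using tower_map_homeos topologically_stable_tower_map_3 not_topologically_stable_tower_map by blast
qed

end
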